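(* Let $\varepsilon>6$ be a constant. The runtime of the sig-cGA with parameter $\varepsilon$ on $\mathrm{DLB}:\{0,1\}^n\to\mathbb{R}$ is $O(n\log n)$ with probability at least $1-O(n^{2-\varepsilon/3}\log^2 n)$.
   Context: Let $n$ be an even positive integer. For $x\in\{0,1\}^n$ consider the blocks $(x_{2\ell+1},x_{2\ell+2})$, $\ell=0,\dots,\frac n2-1$. If $x\neq(1,\dots,1)$, let $m$ be the smallest $\ell$ with $x_{2\ell+1}\neq 1$ or $x_{2\ell+2}\neq 1$, and define $\mathrm{DLB}(x)=2m+1$ if $x_{2m+1}+x_{2m+2}=0$ and $\mathrm{DLB}(x)=2m$ if $x_{2m+1}+x_{2m+2}=1$; set $\mathrm{DLB}(1,\dots,1)=n$. Significance function: for $\varepsilon,\mu>0$ let $s(\varepsilon,\mu)=\varepsilon\max\{\sqrt{\mu\log n},\log n\}$. For a bit string $H\in\{0,1\}^*$, $H[k]$ denotes the string of its last $k$ bits and $\|H[k]\|_0$, $\|H[k]\|_1$ the numbers of zeros and ones in it. For $p\in\{\frac1n,\frac12,1-\frac1n\}$, $\mathrm{sig}_\varepsilon(p,H)=\textsc{up}$ if $p\in\{\frac1n,\frac12\}$ and there is $m\in\mathbb{N}$ with $\|H[2^m]\|_1\ge 2^m p+s(\varepsilon,2^m p)$; $=\textsc{down}$ if $p\in\{\frac12,1-\frac1n\}$ and there is $m\in\mathbb{N}$ with $\|H[2^m]\|_0\ge 2^m(1-p)+s(\varepsilon,2^m(1-p))$; and $=\textsc{stay}$ otherwise. The sig-cGA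 with parameter $\varepsilon$ maximizing $f$: initially $\tau^{(0)}_i=\frac12$ and $H_i=\emptyset$ (empty history) for all $i\in[1..n]$. In iteration $t$, sample two individuals $x,y$ independently, each bit $j$ being $1$ independently with probability $\tau^{(t)}_j$; evaluate both; let the winner $z$ be the one with larger $f$-value (chosen uniformly at random in case of a tie). For each $i$: append $z_i$ to $H_i$; if $\mathrm{sig}_\varepsilon(\tau^{(t)}_i,H_i)=\textsc{up}$ set $\tau^{(t+1)}_i=1-\frac1n$, if it is $\textsc{down}$ set $\tau^{(t+1)}_i=\frac1n$, otherwise $\tau^{(t+1)}_i=\tau^{(t)}_i$; if $\tau^{(t+1)}_i\ne\tau^{(t)}_i$, reset $H_i=\emptyset$. The runtime is the number of fitness evaluations until the optimum $(1,\dots,1)$ is sampled for the first time. *)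

theory Defs
  imports "HOL-Probability.Probability"
begin

text \<open>Bit strings of length n are bool lists; list position j (0-based) is bit x_(j+1).
  True = 1, False = 0.\<close>

definition all_ones :: "nat \<Rightarrow> bool list" where
  "all_ones n = replicate n True"

definition DLB :: "nat \<Rightarrow> bool list \<Rightarrow> nat" where
  "DLB n x = (if x = all_ones n then n else
     (let m = (LEAST l. \<not> (x ! (2*l) \<and> x ! (2*l+1))) in
      if \<not> x ! (2*m) \<and> \<not> x ! (2*m+1) then 2*m+1 else 2*m))"

definition sfun :: "real \<Rightarrow> nat \<Rightarrow> real \<Rightarrow> real" where
  "sfun \<epsilon> n \<mu> = \<epsilon> * max (sqrt (\<mu> * ln (real n))) (ln (real n))"

definition ones :: "bool list \<Rightarrow> nat" where "ones H = length (filter id H)"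
definition zeros :: "bool list \<Rightarrow> nat" where "zeros H = length (filter Not H)"

text \<open>Last k bits of a history (most recent bit is the last list element).\<close>
definition lastk :: "nat \<Rightarrow> bool list \<Rightarrow> bool list" where
  "lastk k H = drop (length H - k) H"

datatype sigval = Up | Down | Stay

definition sig :: "real \<Rightarrow> nat \<Rightarrow> real \<Rightarrow> bool list \<Rightarrow> sigval" where
  "sig \<epsilon> n p H =
    (if (p = 1 / real n \<or> p = 1/2) \<and>
        (\<exists>m::nat. 2^m \<le> length H \<and>
            real (ones (lastk (2^m) H)) \<ge> 2^m * p + sfun \<epsilon> n (2^m * p))
     then Up
     else if (p = 1/2 \<or> p = 1 - 1 / real n) \<and>
        (\<exists>m::nat. 2^m \<le> length H \<and>
            real (zeros (lastk (2^m) H)) \<ge> 2^m * (1 - p) + sfun \<epsilon> n (2^m * (1 - p)))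
     then Down
     else Stay)"

fun sample_bits :: "(nat \<Rightarrow> real) \<Rightarrow> nat list \<Rightarrow> bool list pmf" where
  "sample_bits tau [] = return_pmf []"
| "sample_bits tau (i # is) =
     bind_pmf (bernoulli_pmf (tau i)) (\<lambda>b.
     bind_pmf (sample_bits tau is) (\<lambda>bs. return_pmf (b # bs)))"

definition sample_ind :: "nat \<Rightarrow> (nat \<Rightarrow> real) \<Rightarrow> bool list pmf" where
  "sample_ind n tau = sample_bits tau [0..<n]"

text \<open>State: frequency vector, histories, first evaluation count at which the optimum
  was sampled (if any), and number of completed iterations.\<close>
type_synonym state = "(nat \<Rightarrow> real) \<times> (nat \<Rightarrow> bool list) \<times> nat option \<times> nat"

definition tau_of :: "state \<Rightarrow> nat \<Rightarrow> real" where "tau_of s = fst s"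
definition hist_of :: "state \<Rightarrow> nat \<Rightarrow> bool list" where "hist_of s = fst (snd s)"
definition found_of :: "state \<Rightarrow> nat option" where "found_of s = fst (snd (snd s))"
definition iter_of :: "state \<Rightarrow> nat" where "iter_of s = snd (snd (snd s))"

definition init_state :: state where
  "init_state = ((\<lambda>i. 1/2), (\<lambda>i. []), None, 0)"

definition winner :: "nat \<Rightarrow> bool list \<Rightarrow> bool list \<Rightarrow> bool list pmf" where
  "winner n x y =
    (if DLB n x > DLB n y then return_pmf x
     else if DLB n y > DLB n x then return_pmf y
     else bind_pmf (bernoulli_pmf (1/2)) (\<lambda>c. return_pmf (if c then x else y)))"

definition new_tau :: "real \<Rightarrow> nat \<Rightarrow> real \<Rightarrow> bool list \<Rightarrow> real" where
  "new_tau \<epsilon> n p H = (case sig \<epsilon> n p H of Up \<Rightarrow> 1 - 1 / real n | Down \<Rightarrow> 1 / real n | Stay \<Rightarrow> p)"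

text \<open>One iteration t of the sig-cGA: x is evaluation 2t+1, y is evaluation 2t+2.\<close>
definition sig_cga_step :: "real \<Rightarrow> nat \<Rightarrow> state \<Rightarrow> state pmf" where
  "sig_cga_step \<epsilon> n s =
    bind_pmf (sample_ind n (tau_of s)) (\<lambda>x.
    bind_pmf (sample_ind n (tau_of s)) (\<lambda>y.
    bind_pmf (winner n x y) (\<lambda>z.
      let t = iter_of s;
          found' = (case found_of s of Some r \<Rightarrow> Some r
                    | None \<Rightarrow> if x = all_ones n then Some (2*t+1)
                              else if y = all_ones n then Some (2*t+2) else None);
          H' = (\<lambda>i. hist_of s i @ [z ! i]);
          tau' = (\<lambda>i. new_tau \<epsilon> n (tau_of s i) (H' i));
          H'' = (\<lambda>i. if tau' i \<noteq> tau_of s i then [] else H' i)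
      in return_pmf (tau', H'', found', Suc t))))"

fun sig_cga_run :: "real \<Rightarrow> nat \<Rightarrow> nat \<Rightarrow> state pmf" where
  "sig_cga_run \<epsilon> n 0 = return_pmf init_state"
| "sig_cga_run \<epsilon> n (Suc k) = bind_pmf (sig_cga_run \<epsilon> n k) (sig_cga_step \<epsilon> n)"

text \<open>Probability that the runtime (number of fitness evaluations until the optimum is
  first sampled) is at most T. Running ceil(T) iterations is enough since each iteration
  performs two evaluations.\<close>
definition prob_runtime_le :: "real \<Rightarrow> nat \<Rightarrow> real \<Rightarrow> real" where
  "prob_runtime_le \<epsilon> n T =
     measure_pmf.prob (sig_cga_run \<epsilon> n (nat \<lceil>T\<rceil>))
       {s. \<exists>r. found_of s = Some r \<and> real r \<le> T}"

end

theory Submission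
  imports Defs
begin

(* As long as no frequency has decreased, all frequencies are 1/2 or 1 - 1/n.  For such
   frequency vectors the leading-blocks structure of DLB makes the winner's bit i equal to one
   with probability at least the frequency of bit i, and with probability at least
   1/2 + 1/256 at the first position whose frequency is still 1/2.  Along the history of a
   bit, the number of zeros in a window of length 2^m is therefore dominated by a binomial
   variable, and an exponential-moment (Chernoff) bound shows that in one iteration the
   significance test wrongly fires "down" with probability O(n log n * n^(-eps/3)), and that a
   window of L = Theta(log n) iterations passes without the first frequency 1/2 moving up
   with probability O(n * n^(-eps)).  Outside these failure events some frequency jumps from
   1/2 to 1 - 1/n every L iterations, so after L n iterations all frequencies are 1 - 1/n and
   every further iteration samples the optimum with probability at least (1 - 1/n)^n >= 1/4.
   A union bound over O(n log n) iterations gives the claimed failure probability. *)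

section \<open>The winner distribution for a given frequency vector\<close>

fun bernoulli_list :: "real list \<Rightarrow> bool list pmf" where
  "bernoulli_list [] = return_pmf []"
| "bernoulli_list (p # ps) = bind_pmf (bernoulli_pmf p) (\<lambda>b. map_pmf (Cons b) (bernoulli_list ps))"

lemma sample_bits_eq_bernoulli_list: "sample_bits tau is = bernoulli_list (map tau is)"
  by (induction "is") (simp_all add: map_pmf_def)

lemma length_of_set_bernoulli_list: "xs \<in> set_pmf (bernoulli_list ps) \<Longrightarrow> length xs = length ps"
  by (induction ps arbitrary: xs) auto

lemma map_nth_bernoulli_list:
  assumes "i < length ps" "\<forall>p\<in>set ps. 0 \<le> p \<and> p \<le> 1"
  shows "map_pmf (\<lambda>x. x ! i) (bernoulli_list ps) = bernoulli_pmf (ps ! i)"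
  using assms
proof (induction ps arbitrary: i)
  case Nil
  then show ?case by simp
next
  case (Cons p ps)
  show ?case
  proof (cases i)
    case 0
    then show ?thesis
      by (simp add: map_bind_pmf map_pmf_comp bind_return_pmf' map_pmf_def[symmetric] o_def)
  next
    case (Suc j)
    then have "map_pmf (\<lambda>x. x ! j) (bernoulli_list ps) = bernoulli_pmf (ps ! j)"
      using Cons by auto
    then show ?thesis
      using Suc by (simp add: map_bind_pmf map_pmf_comp o_def bind_pmf_const)
  qed
qed

lemma pmf_bernoulli_list_all_True:
  assumes "\<forall>p\<in>set ps. 0 \<le> p \<and> p \<le> 1"
  shows "pmf (bernoulli_list ps) (replicate (length ps) True) = prod_list ps"
  using assms
proof (induction ps)
  case Nil
  then show ?case by simp
next
  case (Cons p ps)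
  have "pmf (map_pmf (Cons True) (bernoulli_list ps)) (True # replicate (length ps) True)
      = pmf (bernoulli_list ps) (replicate (length ps) True)"
    by (rule pmf_map_inj') (simp add: inj_def)
  moreover have "pmf (map_pmf (Cons False) (bernoulli_list ps)) (True # replicate (length ps) True) = 0"
    by (simp add: pmf_map vimage_def)
  ultimately show ?case
    using Cons by (simp add: pmf_bind)
qed

fun dlb_list :: "bool list \<Rightarrow> nat" where
  "dlb_list (a # b # r) = (if a \<and> b then 2 + dlb_list r else if \<not> a \<and> \<not> b then 1 else 0)"
| "dlb_list _ = 0"

lemma ex_block_not_ones:
  assumes "length r = k" "r \<noteq> all_ones k"
  shows "\<exists>l. \<not> (r ! (2*l) \<and> r ! (2*l+1))"
proof -
  obtain j where "j < k" "\<not> r ! j"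
    using assms by (auto simp: all_ones_def list_eq_iff_nth_eq)
  moreover have "j = 2 * (j div 2) \<or> j = 2 * (j div 2) + 1"
    by presburger
  ultimately show ?thesis
    by metis
qed

lemma DLB_True_True_Cons:
  assumes "length r = k"
  shows "DLB (Suc (Suc k)) (True # True # r) = 2 + DLB k r"
proof (cases "r = all_ones k")
  case True
  then show ?thesis
    by (simp add: DLB_def all_ones_def)
next
  case False
  let ?P = "\<lambda>l. \<not> ((True # True # r) ! (2*l) \<and> (True # True # r) ! (2*l+1))"
  obtain l where "\<not> (r ! (2*l) \<and> r ! (2*l+1))"
    using ex_block_not_ones[OF assms False] by blast
  then have "(LEAST l. ?P l) = Suc (LEAST l. ?P (Suc l))"
    by (intro Least_Suc[of _ "Suc l"]) auto
  then have "(LEAST l. ?P l) = Suc (LEAST l. \<not> (r ! (2*l) \<and> r ! (2*l+1)))"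
    by simp
  moreover have "True # True # r \<noteq> all_ones (Suc (Suc k))"
    using False by (simp add: all_ones_def)
  ultimately show ?thesis
    using False unfolding DLB_def Let_def by simp
qed

lemma DLB_Cons_Cons_not_both:
  assumes "\<not> (a \<and> b)"
  shows "DLB n (a # b # r) = (if \<not> a \<and> \<not> b then 1 else 0)"
proof -
  have "(LEAST l. \<not> ((a # b # r) ! (2*l) \<and> (a # b # r) ! (2*l+1))) = 0"
    using assms by (intro Least_equality) auto
  moreover have "a # b # r \<noteq> all_ones n"
    using assms by (cases n; cases "n - 1") (auto simp: all_ones_def)
  ultimately show ?thesis
    using assms by (auto simp: DLB_def Let_def)
qed

lemma DLB_eq_dlb_list: "length x = n \<Longrightarrow> even n \<Longrightarrow> DLB n x = dlb_list x"
proof (induction x arbitrary: n rule: dlb_list.induct)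
  case (1 a b r)
  then obtain k where n: "n = Suc (Suc k)" and "length r = k" "even k"
    by auto
  then show ?case
    using 1 DLB_True_True_Cons DLB_Cons_Cons_not_both by auto
next
  case "2_1"
  then show ?case
    by (simp add: DLB_def all_ones_def)
next
  case ("2_2" v)
  then show ?case
    by auto
qed

definition dlb_select :: "bool \<Rightarrow> bool list \<Rightarrow> bool list \<Rightarrow> bool list" where
  "dlb_select c x y =
     (if dlb_list x > dlb_list y then x else if dlb_list y > dlb_list x then y else if c then x else y)"

lemma winner_eq_map_dlb_select:
  "length x = n \<Longrightarrow> length y = n \<Longrightarrow> even n \<Longrightarrow>
   winner n x y = map_pmf (\<lambda>c. dlb_select c x y) (bernoulli_pmf (1/2))"
  by (auto simp: winner_def dlb_select_def DLB_eq_dlb_list map_pmf_def)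

abbreviation coin :: "bool pmf" where
  "coin \<equiv> bernoulli_pmf (1/2)"

definition winner_pmf :: "real list \<Rightarrow> bool list pmf" where
  "winner_pmf ps = bind_pmf (bernoulli_list ps) (\<lambda>x. bind_pmf (bernoulli_list ps) (\<lambda>y.
     map_pmf (\<lambda>c. dlb_select c x y) coin))"

lemma sample_winner_eq_winner_pmf:
  "even n \<Longrightarrow>
   bind_pmf (sample_ind n tau) (\<lambda>x. bind_pmf (sample_ind n tau) (\<lambda>y. winner n x y))
     = winner_pmf (map tau [0..<n])"
  unfolding winner_pmf_def sample_ind_def sample_bits_eq_bernoulli_list
  by (intro bind_pmf_cong refl) (auto dest!: length_of_set_bernoulli_list simp: winner_eq_map_dlb_select)

definition first_wins_block :: "bool \<Rightarrow> bool \<Rightarrow> bool \<Rightarrow> bool \<Rightarrow> bool \<Rightarrow> bool" where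
  "first_wins_block a1 b1 a2 b2 c =
     (if a1 \<and> b1 then True else if a2 \<and> b2 then False
      else dlb_list [a1, b1] > dlb_list [a2, b2] \<or> (dlb_list [a1, b1] = dlb_list [a2, b2] \<and> c))"

lemma dlb_select_Cons_Cons:
  "dlb_select c (a1 # b1 # x) (a2 # b2 # y) =
    (if a1 \<and> b1 \<and> a2 \<and> b2 then True # True # dlb_select c x y
     else if first_wins_block a1 b1 a2 b2 c then a1 # b1 # x else a2 # b2 # y)"
  by (cases a1; cases b1; cases a2; cases b2; simp add: dlb_select_def first_wins_block_def)

lemma bind_pmf_rotate3:
  "bind_pmf A (\<lambda>x. bind_pmf B (\<lambda>y. bind_pmf C (\<lambda>z. K x y z))) =
   bind_pmf B (\<lambda>y. bind_pmf C (\<lambda>z. bind_pmf A (\<lambda>x. K x y z)))"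
proof -
  have "bind_pmf A (\<lambda>x. bind_pmf B (\<lambda>y. bind_pmf C (\<lambda>z. K x y z))) =
        bind_pmf B (\<lambda>y. bind_pmf A (\<lambda>x. bind_pmf C (\<lambda>z. K x y z)))"
    by (rule bind_commute_pmf)
  also have "\<dots> = bind_pmf B (\<lambda>y. bind_pmf C (\<lambda>z. bind_pmf A (\<lambda>x. K x y z)))"
    by (intro bind_pmf_cong refl) (rule bind_commute_pmf)
  finally show ?thesis .
qed

definition winner_given_block :: "real list \<Rightarrow> bool \<Rightarrow> bool \<Rightarrow> bool \<Rightarrow> bool \<Rightarrow> bool list pmf" where
  "winner_given_block ps a1 b1 a2 b2 = bind_pmf (bernoulli_list ps) (\<lambda>x. bind_pmf (bernoulli_list ps) (\<lambda>y.
     map_pmf (\<lambda>c. dlb_select c (a1 # b1 # x) (a2 # b2 # y)) coin))"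

lemma winner_pmf_Cons_Cons:
  "winner_pmf (a # b # ps) =
    bind_pmf (bernoulli_pmf a) (\<lambda>a1. bind_pmf (bernoulli_pmf b) (\<lambda>b1.
    bind_pmf (bernoulli_pmf a) (\<lambda>a2. bind_pmf (bernoulli_pmf b) (\<lambda>b2.
      winner_given_block ps a1 b1 a2 b2))))"
  unfolding winner_pmf_def winner_given_block_def
  by (simp only: bernoulli_list.simps map_bind_pmf bind_map_pmf bind_assoc_pmf map_pmf_comp
      bind_pmf_rotate3[of "bernoulli_list ps" "bernoulli_pmf a" "bernoulli_pmf b"])

lemma winner_given_block_all_True:
  "winner_given_block ps True True True True = map_pmf (\<lambda>z. True # True # z) (winner_pmf ps)"
  unfolding winner_given_block_def winner_pmf_def dlb_select_Cons_Cons
  by (simp add: map_bind_pmf map_pmf_comp)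

lemma winner_given_block_not_all_True:
  assumes "\<not> (a1 \<and> b1 \<and> a2 \<and> b2)"
  shows "winner_given_block ps a1 b1 a2 b2 =
    bind_pmf (bernoulli_list ps) (\<lambda>x. bind_pmf (bernoulli_list ps) (\<lambda>y.
      map_pmf (\<lambda>c. if first_wins_block a1 b1 a2 b2 c then a1 # b1 # x else a2 # b2 # y) coin))"
  unfolding winner_given_block_def dlb_select_Cons_Cons if_not_P[OF assms] ..

text \<open>Whichever of two independent samples from \<open>M\<close> is selected, a statistic \<open>h\<close> that
  only sees the sample part is distributed as under \<open>M\<close>.\<close>
lemma map_pmf_select_iid:
  assumes hf: "\<And>x. h (f x) = k x" and hg: "\<And>x. h (g x) = k x"
  shows "map_pmf h (bind_pmf M (\<lambda>x. bind_pmf M (\<lambda>y. map_pmf (\<lambda>c. if P c then f x else g y) C)))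
           = map_pmf k M"
proof -
  have "map_pmf h (bind_pmf M (\<lambda>x. bind_pmf M (\<lambda>y. map_pmf (\<lambda>c. if P c then f x else g y) C)))
      = bind_pmf M (\<lambda>x. bind_pmf M (\<lambda>y. map_pmf (\<lambda>c. if P c then k x else k y) C))"
  proof -
    have "\<And>x y. (\<lambda>c. h (if P c then f x else g y)) = (\<lambda>c. if P c then k x else k y)"
      using hf hg by (auto simp: fun_eq_iff)
    then show ?thesis
      by (simp only: map_bind_pmf map_pmf_comp)
  qed
  also have "\<dots> = bind_pmf C (\<lambda>c. bind_pmf M (\<lambda>x. bind_pmf M (\<lambda>y. return_pmf (if P c then k x else k y))))"
  proof -
    have "\<And>x. bind_pmf M (\<lambda>y. bind_pmf C (\<lambda>c. return_pmf (if P c then k x else k y)))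
       = bind_pmf C (\<lambda>c. bind_pmf M (\<lambda>y. return_pmf (if P c then k x else k y)))"
      by (rule bind_commute_pmf)
    then show ?thesis
      unfolding map_pmf_def by (simp add: bind_commute_pmf[of M C])
  qed
  also have "\<dots> = bind_pmf C (\<lambda>c. map_pmf k M)"
  proof (intro bind_pmf_cong refl)
    fix c
    show "bind_pmf M (\<lambda>x. bind_pmf M (\<lambda>y. return_pmf (if P c then k x else k y))) = map_pmf k M"
      by (cases "P c") (simp_all add: bind_pmf_const map_pmf_def)
  qed
  also have "\<dots> = map_pmf k M"
    by (simp add: bind_pmf_const)
  finally show ?thesis .
qed

lemma map_nth0_winner_given_block:
  "map_pmf (\<lambda>z. z ! 0) (winner_given_block ps a1 b1 a2 b2) =
    (if a1 \<and> b1 \<and> a2 \<and> b2 then return_pmf True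
     else map_pmf (\<lambda>c. if first_wins_block a1 b1 a2 b2 c then a1 else a2) coin)"
  by (cases "a1 \<and> b1 \<and> a2 \<and> b2")
    (simp_all add: winner_given_block_all_True winner_given_block_not_all_True map_pmf_comp
      map_bind_pmf if_distrib[of "\<lambda>z. z ! 0"] cong: if_cong)

lemma map_nth1_winner_given_block:
  "map_pmf (\<lambda>z. z ! 1) (winner_given_block ps a1 b1 a2 b2) =
    (if a1 \<and> b1 \<and> a2 \<and> b2 then return_pmf True
     else map_pmf (\<lambda>c. if first_wins_block a1 b1 a2 b2 c then b1 else b2) coin)"
  by (cases "a1 \<and> b1 \<and> a2 \<and> b2")
    (simp_all add: winner_given_block_all_True winner_given_block_not_all_True map_pmf_comp
      map_bind_pmf if_distrib[of "\<lambda>z. z ! 1"] cong: if_cong)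

lemma map_nth_Suc_Suc_winner_given_block:
  "map_pmf (\<lambda>z. z ! Suc (Suc j)) (winner_given_block ps a1 b1 a2 b2) =
    (if a1 \<and> b1 \<and> a2 \<and> b2 then map_pmf (\<lambda>z. z ! j) (winner_pmf ps)
     else map_pmf (\<lambda>z. z ! j) (bernoulli_list ps))"
proof (cases "a1 \<and> b1 \<and> a2 \<and> b2")
  case True
  then show ?thesis
    by (simp add: winner_given_block_all_True map_pmf_comp)
next
  case False
  show ?thesis
    unfolding winner_given_block_not_all_True[OF False] if_not_P[OF False]
    by (rule map_pmf_select_iid) simp_all
qed

text \<open>The probability that the winner's first bit of a block is one when the two bits of the
  block have frequencies \<open>a\<close> and \<open>b\<close> and all earlier blocks are ones.\<close>
definition block_bit_prob :: "real \<Rightarrow> real \<Rightarrow> real" where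
  "block_bit_prob a b = 1 - (1 - a*b)^2 + a*(1-b)*(a*(1-b) + (1-a)*b)"

fun winner_bit_prob :: "real list \<Rightarrow> nat \<Rightarrow> real" where
  "winner_bit_prob (a # b # ps) 0 = block_bit_prob a b"
| "winner_bit_prob (a # b # ps) (Suc 0) = block_bit_prob b a"
| "winner_bit_prob (a # b # ps) (Suc (Suc j)) =
     (a*b)^2 * winner_bit_prob ps j + (1 - (a*b)^2) * ps ! j"
| "winner_bit_prob _ _ = 0"

lemma pmf_map_pmf_True: "pmf (map_pmf f M) True = measure_pmf.prob M {x. f x}"
  by (simp add: pmf_map vimage_def)

lemma measure_bernoulli_pmf:
  assumes "0 \<le> p" "p \<le> 1"
  shows "measure_pmf.prob (bernoulli_pmf p) A =
           (if True \<in> A then p else 0) + (if False \<in> A then 1 - p else 0)"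
proof -
  have "measure_pmf.prob (bernoulli_pmf p) A = sum (pmf (bernoulli_pmf p)) A"
    by (intro measure_measure_pmf_finite) (auto intro: finite_subset[of A "{True, False}"])
  also have "\<dots> = sum (\<lambda>x. if x \<in> A then pmf (bernoulli_pmf p) x else 0) UNIV"
    using sum.inter_restrict[of UNIV "pmf (bernoulli_pmf p)" A] by simp
  also have "\<dots> = (if True \<in> A then p else 0) + (if False \<in> A then 1 - p else 0)"
    using assms by (simp add: UNIV_bool)
  finally show ?thesis .
qed

lemma pmf_bind_bernoulli:
  "0 \<le> p \<Longrightarrow> p \<le> 1 \<Longrightarrow>
   pmf (bind_pmf (bernoulli_pmf p) F) x = p * pmf (F True) x + (1 - p) * pmf (F False) x"
  by (simp add: pmf_bind)

lemma pmf_winner_pmf_nth0: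
  "0 \<le> a \<Longrightarrow> a \<le> 1 \<Longrightarrow> 0 \<le> b \<Longrightarrow> b \<le> 1 \<Longrightarrow>
   pmf (map_pmf (\<lambda>z. z ! 0) (winner_pmf (a # b # ps))) True = block_bit_prob a b"
  by (simp only: winner_pmf_Cons_Cons map_bind_pmf map_nth0_winner_given_block)
    (simp add: pmf_bind_bernoulli pmf_map_pmf_True measure_bernoulli_pmf first_wins_block_def,
     simp add: block_bit_prob_def algebra_simps power2_eq_square)

lemma pmf_winner_pmf_nth1:
  "0 \<le> a \<Longrightarrow> a \<le> 1 \<Longrightarrow> 0 \<le> b \<Longrightarrow> b \<le> 1 \<Longrightarrow>
   pmf (map_pmf (\<lambda>z. z ! 1) (winner_pmf (a # b # ps))) True = block_bit_prob b a"
  by (simp only: winner_pmf_Cons_Cons map_bind_pmf map_nth1_winner_given_block)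
    (simp add: pmf_bind_bernoulli pmf_map_pmf_True measure_bernoulli_pmf first_wins_block_def,
     simp add: block_bit_prob_def algebra_simps power2_eq_square)

lemma pmf_winner_pmf_nth_Suc_Suc:
  "0 \<le> a \<Longrightarrow> a \<le> 1 \<Longrightarrow> 0 \<le> b \<Longrightarrow> b \<le> 1 \<Longrightarrow>
   pmf (map_pmf (\<lambda>z. z ! Suc (Suc j)) (winner_pmf (a # b # ps))) True =
     (a*b)^2 * pmf (map_pmf (\<lambda>z. z ! j) (winner_pmf ps)) True
     + (1 - (a*b)^2) * pmf (map_pmf (\<lambda>z. z ! j) (bernoulli_list ps)) True"
  by (simp only: winner_pmf_Cons_Cons map_bind_pmf map_nth_Suc_Suc_winner_given_block)
    (simp add: pmf_bind_bernoulli, simp add: algebra_simps power2_eq_square)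

lemma prob_winner_pmf_nth:
  assumes "even (length ps)" "\<forall>p\<in>set ps. 0 \<le> p \<and> p \<le> 1" "i < length ps"
  shows "measure_pmf.prob (winner_pmf ps) {z. z ! i} = winner_bit_prob ps i"
proof -
  have "pmf (map_pmf (\<lambda>z. z ! i) (winner_pmf ps)) True = winner_bit_prob ps i"
    using assms
  proof (induction ps arbitrary: i rule: induct_list012)
    case (3 a b ps)
    then have ab: "0 \<le> a" "a \<le> 1" "0 \<le> b" "b \<le> 1"
      by auto
    consider "i = 0" | "i = 1" | j where "i = Suc (Suc j)"
      by (metis One_nat_def not0_implies_Suc)
    then show ?case
    proof cases
      case 3
      then have "pmf (map_pmf (\<lambda>z. z ! j) (bernoulli_list ps)) True = ps ! j"
        using "3.prems" by (simp add: map_nth_bernoulli_list)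
      then show ?thesis
        using 3 "3.IH"[of j] "3.prems" pmf_winner_pmf_nth_Suc_Suc[OF ab, of j ps] by simp
    qed (use pmf_winner_pmf_nth0[OF ab] pmf_winner_pmf_nth1[OF ab] in simp_all)
  qed simp_all
  then show ?thesis
    by (simp add: pmf_map_pmf_True)
qed

section \<open>Winner bits when all frequencies are \<open>1/2\<close> or \<open>1 - e\<close>\<close>

definition half_or_high :: "real \<Rightarrow> real \<Rightarrow> bool" where
  "half_or_high e p \<longleftrightarrow> p = 1/2 \<or> p = 1 - e"

lemma half_or_high_bounds: "e \<le> 1/4 \<Longrightarrow> half_or_high e p \<Longrightarrow> 0 < e \<Longrightarrow> 0 \<le> p \<and> p \<le> 1"
  by (auto simp: half_or_high_def)

lemma block_bit_prob_half_gain: "block_bit_prob a (1/2) - a = a * (1 - a) / 4"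
  by (simp add: block_bit_prob_def algebra_simps power2_eq_square)

lemma block_bit_prob_high_gain: "block_bit_prob a (1 - e) - a = a * (1 - a) * (1 - e - e^2)"
  by (simp add: block_bit_prob_def algebra_simps power2_eq_square)

lemma small_quadratic_ge:
  fixes e :: real
  assumes "0 < e" "e \<le> 1/4"
  shows "1 - e - e^2 \<ge> 1/4"
proof -
  have "e * e \<le> e * (1/4)"
    using assms by (intro mult_left_mono) auto
  then show ?thesis
    using assms unfolding power2_eq_square by linarith
qed

lemma block_bit_prob_ge:
  assumes "0 < e" "e \<le> 1/4" "half_or_high e a" "half_or_high e b"
  shows "block_bit_prob a b \<ge> a"
proof -
  have a: "0 \<le> a * (1 - a)"
    using assms by (auto simp: half_or_high_def)
  from assms(4) consider "b = 1/2" | "b = 1 - e"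
    by (auto simp: half_or_high_def)
  then show ?thesis
  proof cases
    case 1
    show ?thesis
      using a block_bit_prob_half_gain[of a] unfolding 1 by simp
  next
    case 2
    have "0 \<le> a * (1 - a) * (1 - e - e^2)"
      using a small_quadratic_ge[OF assms(1,2)] by simp
    then show ?thesis
      using 2 block_bit_prob_high_gain[of a e] by simp
  qed
qed

lemma block_bit_prob_half_ge:
  assumes "0 < e" "e \<le> 1/4" "half_or_high e b"
  shows "block_bit_prob (1/2) b \<ge> 1/2 + 1/16"
proof -
  from assms(3) consider "b = 1/2" | "b = 1 - e"
    by (auto simp: half_or_high_def)
  then show ?thesis
  proof cases
    case 1
    show ?thesis
      using block_bit_prob_half_gain[of "1/2"] unfolding 1 by simp
  next
    case 2
    then show ?thesis
      using block_bit_prob_high_gain[of "1/2" e] small_quadratic_ge[OF assms(1,2)] by simp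
  qed
qed

lemma winner_bit_prob_ge:
  assumes "even (length ps)" "\<forall>p\<in>set ps. half_or_high e p" "0 < e" "e \<le> 1/4" "i < length ps"
  shows "winner_bit_prob ps i \<ge> ps ! i"
  using assms
proof (induction ps arbitrary: i rule: induct_list012)
  case (3 a b ps)
  consider "i = 0" | "i = 1" | j where "i = Suc (Suc j)"
    by (metis One_nat_def not0_implies_Suc)
  then show ?case
  proof cases
    case 3
    then have "winner_bit_prob ps j \<ge> ps ! j"
      using "3.IH" "3.prems" by auto
    then have "(a*b)^2 * winner_bit_prob ps j \<ge> (a*b)^2 * ps ! j"
      by (simp add: mult_left_mono)
    then show ?thesis
      using 3 by (simp add: algebra_simps)
  qed (use "3.prems" block_bit_prob_ge in auto)
qed simp_all

lemma winner_bit_prob_first_half_ge: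
  assumes "even (length ps)" "\<forall>p\<in>set ps. half_or_high e p" "0 < e" "e \<le> 1/4" "i < length ps"
    and "ps ! i = 1/2" "\<forall>k < 2 * (i div 2). ps ! k = 1 - e"
  shows "winner_bit_prob ps i \<ge> 1/2 + (1 - e)^(4 * (i div 2)) / 16"
  using assms
proof (induction ps arbitrary: i rule: induct_list012)
  case (3 a b ps)
  consider "i = 0" | "i = 1" | j where "i = Suc (Suc j)"
    by (metis One_nat_def not0_implies_Suc)
  then show ?case
  proof cases
    case 1
    have a: "a = 1/2"
      using "3.prems"(6) 1 by simp
    show ?thesis
      using 1 "3.prems"(2-4) block_bit_prob_half_ge[of e b] unfolding a by simp
  next
    case 2
    have b: "b = 1/2"
      using "3.prems"(6) 2 by simp
    show ?thesis
      using 2 "3.prems"(2-4) block_bit_prob_half_ge[of e a] unfolding b by simp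
  next
    case 3
    have ab: "a = 1 - e" "b = 1 - e" and pj: "ps ! j = 1/2"
      using "3.prems"(6) "3.prems"(7)[rule_format, of 0] "3.prems"(7)[rule_format, of 1] 3 by auto
    have "\<forall>k < 2 * (j div 2). ps ! k = 1 - e"
      using "3.prems"(7) 3 by fastforce
    then have IH: "winner_bit_prob ps j - 1/2 \<ge> (1 - e)^(4 * (j div 2)) / 16"
      using "3.IH"[of j] "3.prems" 3 pj by auto
    have "(a*b)^2 = (1 - e)^4"
      using ab by (simp add: power2_eq_square power4_eq_xxxx)
    then have "winner_bit_prob (a # b # ps) i - 1/2 = (1 - e)^4 * (winner_bit_prob ps j - 1/2)"
      unfolding 3 winner_bit_prob.simps pj by (simp add: algebra_simps)
    also have "\<dots> \<ge> (1 - e)^4 * ((1 - e)^(4 * (j div 2)) / 16)"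
      using IH "3.prems"(4) by (intro mult_left_mono) auto
    also have "(1 - e)^4 * ((1 - e)^(4 * (j div 2)) / 16) = (1 - e)^(4 * (i div 2)) / 16"
      using 3 by (simp add: power_add)
    finally show ?thesis
      by simp
  qed
qed simp_all

section \<open>The sig-cGA with a failure flag and a stall counter\<close>

definition cga_update :: "real \<Rightarrow> nat \<Rightarrow> state \<Rightarrow> bool list \<Rightarrow> bool list \<Rightarrow> bool list \<Rightarrow> state" where
  "cga_update \<epsilon> n s x y z = (let t = iter_of s;
          found' = (case found_of s of Some r \<Rightarrow> Some r
                    | None \<Rightarrow> if x = all_ones n then Some (2*t+1)
                              else if y = all_ones n then Some (2*t+2) else None);
          H' = (\<lambda>i. hist_of s i @ [z ! i]);
          tau' = (\<lambda>i. new_tau \<epsilon> n (tau_of s i) (H' i));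
          H'' = (\<lambda>i. if tau' i \<noteq> tau_of s i then [] else H' i)
      in (tau', H'', found', Suc t))"

type_synonym duel_result = "bool list \<times> bool list \<times> bool list"

abbreviation duel_winner :: "duel_result \<Rightarrow> bool list" where
  "duel_winner w \<equiv> snd (snd w)"

definition duel :: "nat \<Rightarrow> state \<Rightarrow> duel_result pmf" where
  "duel n s = bind_pmf (sample_ind n (tau_of s)) (\<lambda>x. bind_pmf (sample_ind n (tau_of s)) (\<lambda>y.
      map_pmf (\<lambda>z. (x, y, z)) (winner n x y)))"

lemma sig_cga_step_eq_map_duel:
  "sig_cga_step \<epsilon> n s = map_pmf (\<lambda>w. cga_update \<epsilon> n s (fst w) (fst (snd w)) (duel_winner w)) (duel n s)"
  unfolding sig_cga_step_def duel_def cga_update_def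
  by (simp add: map_pmf_def bind_assoc_pmf bind_return_pmf Let_def cong: if_cong option.case_cong)

lemma tau_of_cga_update:
  "tau_of (cga_update \<epsilon> n s x y z) i = new_tau \<epsilon> n (tau_of s i) (hist_of s i @ [z ! i])"
  by (simp add: cga_update_def Let_def tau_of_def)

lemma hist_of_cga_update:
  "hist_of (cga_update \<epsilon> n s x y z) i =
    (if new_tau \<epsilon> n (tau_of s i) (hist_of s i @ [z ! i]) \<noteq> tau_of s i then []
     else hist_of s i @ [z ! i])"
  by (simp add: cga_update_def Let_def hist_of_def tau_of_def)

lemma iter_of_cga_update: "iter_of (cga_update \<epsilon> n s x y z) = Suc (iter_of s)"
  by (simp add: cga_update_def Let_def iter_of_def)

lemma found_of_cga_update:
  "found_of (cga_update \<epsilon> n s x y z) =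
    (case found_of s of Some r \<Rightarrow> Some r
     | None \<Rightarrow> if x = all_ones n then Some (2 * iter_of s + 1)
               else if y = all_ones n then Some (2 * iter_of s + 2) else None)"
  by (simp add: cga_update_def Let_def found_of_def)

lemma new_tau_cases:
  "new_tau \<epsilon> n p H = p \<or> new_tau \<epsilon> n p H = 1 - 1 / real n \<or> new_tau \<epsilon> n p H = 1 / real n"
  by (cases "sig \<epsilon> n p H") (auto simp: new_tau_def)

definition half_count :: "nat \<Rightarrow> (nat \<Rightarrow> real) \<Rightarrow> nat" where
  "half_count n \<tau> = card {i. i < n \<and> \<tau> i = 1/2}"

definition freq_changed :: "nat \<Rightarrow> state \<Rightarrow> state \<Rightarrow> bool" where
  "freq_changed n s s' \<longleftrightarrow> (\<exists>i<n. tau_of s' i \<noteq> tau_of s i)"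

definition freq_decreased :: "nat \<Rightarrow> state \<Rightarrow> state \<Rightarrow> bool" where
  "freq_decreased n s s' \<longleftrightarrow> (\<exists>i<n. tau_of s' i < tau_of s i)"

text \<open>Ghost state for the analysis: the flag is raised as soon as a frequency decreases, or
  \<open>L\<close> consecutive iterations pass without any frequency change while some frequency is
  still \<open>1/2\<close>; the counter is the number of iterations since the last frequency change.\<close>
type_synonym aug_state = "state \<times> bool \<times> nat"

abbreviation failed :: "aug_state \<Rightarrow> bool" where
  "failed a \<equiv> fst (snd a)"

abbreviation stall_count :: "aug_state \<Rightarrow> nat" where
  "stall_count a \<equiv> snd (snd a)"

definition aug_update :: "real \<Rightarrow> nat \<Rightarrow> nat \<Rightarrow> aug_state \<Rightarrow> duel_result \<Rightarrow> aug_state" where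
  "aug_update \<epsilon> n L a w =
    (let s = fst a; s' = cga_update \<epsilon> n s (fst w) (fst (snd w)) (duel_winner w) in
     (s', failed a \<or> freq_decreased n s s'
            \<or> (0 < half_count n (tau_of s) \<and> L \<le> Suc (stall_count a) \<and> \<not> freq_changed n s s'),
      if freq_changed n s s' then 0 else Suc (stall_count a)))"

lemma aug_update_simps:
  "fst (aug_update \<epsilon> n L a w) = cga_update \<epsilon> n (fst a) (fst w) (fst (snd w)) (duel_winner w)"
  "failed (aug_update \<epsilon> n L a w) =
     (failed a \<or> freq_decreased n (fst a) (fst (aug_update \<epsilon> n L a w))
      \<or> (0 < half_count n (tau_of (fst a)) \<and> L \<le> Suc (stall_count a)
         \<and> \<not> freq_changed n (fst a) (fst (aug_update \<epsilon> n L a w))))"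
  "stall_count (aug_update \<epsilon> n L a w) =
     (if freq_changed n (fst a) (fst (aug_update \<epsilon> n L a w)) then 0 else Suc (stall_count a))"
  by (simp_all add: aug_update_def Let_def)

definition aug_step :: "real \<Rightarrow> nat \<Rightarrow> nat \<Rightarrow> aug_state \<Rightarrow> aug_state pmf" where
  "aug_step \<epsilon> n L a = map_pmf (aug_update \<epsilon> n L a) (duel n (fst a))"

fun aug_run :: "real \<Rightarrow> nat \<Rightarrow> nat \<Rightarrow> nat \<Rightarrow> aug_state pmf" where
  "aug_run \<epsilon> n L 0 = return_pmf (init_state, False, 0)"
| "aug_run \<epsilon> n L (Suc k) = bind_pmf (aug_run \<epsilon> n L k) (aug_step \<epsilon> n L)"

definition aug_run_duel :: "real \<Rightarrow> nat \<Rightarrow> nat \<Rightarrow> nat \<Rightarrow> (aug_state \<times> duel_result) pmf" where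
  "aug_run_duel \<epsilon> n L k = bind_pmf (aug_run \<epsilon> n L k) (\<lambda>a. map_pmf (\<lambda>w. (a, w)) (duel n (fst a)))"

lemma aug_run_Suc_eq_map_aug_run_duel:
  "aug_run \<epsilon> n L (Suc k) = map_pmf (\<lambda>p. aug_update \<epsilon> n L (fst p) (snd p)) (aug_run_duel \<epsilon> n L k)"
  by (simp add: aug_run_duel_def aug_step_def[abs_def] map_bind_pmf map_pmf_comp)

lemma map_fst_aug_run_duel: "map_pmf fst (aug_run_duel \<epsilon> n L t) = aug_run \<epsilon> n L t"
  by (simp add: aug_run_duel_def map_bind_pmf map_pmf_comp bind_return_pmf')

lemma set_aug_run_duel:
  "p \<in> set_pmf (aug_run_duel \<epsilon> n L t) \<Longrightarrow>
   fst p \<in> set_pmf (aug_run \<epsilon> n L t) \<and> snd p \<in> set_pmf (duel n (fst (fst p)))"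
  by (auto simp: aug_run_duel_def)

lemma set_aug_run_Suc:
  "a' \<in> set_pmf (aug_run \<epsilon> n L (Suc t)) \<Longrightarrow>
   \<exists>a\<in>set_pmf (aug_run \<epsilon> n L t). \<exists>w\<in>set_pmf (duel n (fst a)). a' = aug_update \<epsilon> n L a w"
  by (simp add: aug_step_def image_iff)

lemma map_fst_aug_run: "map_pmf fst (aug_run \<epsilon> n L k) = sig_cga_run \<epsilon> n k"
proof (induction k)
  case (Suc k)
  have "map_pmf fst (aug_run \<epsilon> n L (Suc k)) = bind_pmf (aug_run \<epsilon> n L k) (\<lambda>a. sig_cga_step \<epsilon> n (fst a))"
    by (simp add: map_bind_pmf aug_step_def map_pmf_comp sig_cga_step_eq_map_duel aug_update_def Let_def)
  also have "\<dots> = bind_pmf (map_pmf fst (aug_run \<epsilon> n L k)) (sig_cga_step \<epsilon> n)"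
    by (simp add: bind_map_pmf)
  finally show ?case
    using Suc by simp
qed simp

section \<open>Invariants of the augmented run\<close>

context
  fixes e :: real and n :: nat and \<tau> \<tau>' :: "nat \<Rightarrow> real"
  assumes e: "0 < e" "e \<le> 1/4"
    and half_or_high: "\<forall>k<n. half_or_high e (\<tau> k)"
    and jumps: "\<forall>k<n. \<tau>' k = \<tau> k \<or> \<tau>' k = 1 - e \<or> \<tau>' k = e"
    and no_decrease: "\<forall>k<n. \<tau> k \<le> \<tau>' k"
begin

lemma jump_cases:
  assumes "k < n"
  shows "(\<tau>' k = \<tau> k \<and> half_or_high e (\<tau> k)) \<or> (\<tau> k = 1/2 \<and> \<tau>' k = 1 - e)"
proof -
  have "\<tau> k = 1/2 \<or> \<tau> k = 1 - e"
    using half_or_high assms unfolding half_or_high_def by blast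
  moreover have "\<tau>' k = \<tau> k \<or> \<tau>' k = 1 - e \<or> \<tau>' k = e"
    using jumps assms by blast
  moreover have "\<tau> k \<le> \<tau>' k"
    using no_decrease assms by blast
  ultimately show ?thesis
    using e unfolding half_or_high_def by auto
qed

lemma half_or_high_after_jumps: "k < n \<Longrightarrow> half_or_high e (\<tau>' k)"
  using jump_cases unfolding half_or_high_def by metis

lemma half_count_after_jumps_le: "half_count n \<tau>' \<le> half_count n \<tau>"
proof -
  have "{k. k < n \<and> \<tau>' k = 1/2} \<subseteq> {k. k < n \<and> \<tau> k = 1/2}"
    using jump_cases e by fastforce
  then show ?thesis
    unfolding half_count_def by (intro card_mono) simp_all
qed

lemma half_count_after_change_less:
  assumes "\<exists>k<n. \<tau>' k \<noteq> \<tau> k"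
  shows "half_count n \<tau>' < half_count n \<tau>"
proof -
  obtain k where k: "k < n" "\<tau>' k \<noteq> \<tau> k"
    using assms by blast
  then have "k \<in> {k. k < n \<and> \<tau> k = 1/2}" "k \<notin> {k. k < n \<and> \<tau>' k = 1/2}"
    using jump_cases[OF k(1)] e by auto
  moreover have "{k. k < n \<and> \<tau>' k = 1/2} \<subseteq> {k. k < n \<and> \<tau> k = 1/2}"
    using jump_cases e by fastforce
  ultimately show ?thesis
    unfolding half_count_def by (intro psubset_card_mono) auto
qed

end

lemma half_count_le: "half_count n \<tau> \<le> n"
proof -
  have "{i. i < n \<and> \<tau> i = 1/2} \<subseteq> {..<n}"
    by auto
  then show ?thesis
    unfolding half_count_def by (metis card_lessThan card_mono finite_lessThan)
qed

text \<open>While the run has not failed, every iteration either changes a frequency, which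
  lowers the number of frequencies at \<open>1/2\<close>, or increases the stall counter, which stays
  below \<open>L\<close>; hence \<open>t \<le> L (n - half_count) + stall_count\<close>.\<close>
definition aug_inv :: "nat \<Rightarrow> nat \<Rightarrow> nat \<Rightarrow> aug_state \<Rightarrow> bool" where
  "aug_inv n L t a \<longleftrightarrow> iter_of (fst a) = t
     \<and> (\<forall>k<n. stall_count a \<le> length (hist_of (fst a) k) \<and> length (hist_of (fst a) k) \<le> t)
     \<and> (\<not> failed a \<longrightarrow> (\<forall>k<n. half_or_high (1 / real n) (tau_of (fst a) k)))
     \<and> (\<not> failed a \<longrightarrow> 0 < half_count n (tau_of (fst a)) \<longrightarrow>
           stall_count a + 1 \<le> L \<and> t \<le> L * (n - half_count n (tau_of (fst a))) + stall_count a)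
     \<and> (\<forall>r. found_of (fst a) = Some r \<longrightarrow> r \<le> 2 * t)"

lemma aug_inv_init: "1 \<le> L \<Longrightarrow> aug_inv n L 0 (init_state, False, 0)"
  by (simp add: aug_inv_def init_state_def iter_of_def hist_of_def tau_of_def half_or_high_def
      found_of_def)

lemma progress_after_change:
  fixes L n t c Q Q' :: nat
  assumes "c + 1 \<le> L" "t \<le> L * (n - Q) + c" "Q \<le> n" "Q' < Q"
  shows "Suc t \<le> L * (n - Q')"
proof -
  have "L * (n - Q + 1) \<le> L * (n - Q')"
    using assms(3,4) by (intro mult_left_mono) auto
  then show ?thesis
    using assms(1,2) by (simp add: algebra_simps)
qed

lemma tau_of_aug_update_cases:
  "tau_of (fst (aug_update \<epsilon> n L a w)) k = tau_of (fst a) k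
   \<or> tau_of (fst (aug_update \<epsilon> n L a w)) k = 1 - 1 / real n
   \<or> tau_of (fst (aug_update \<epsilon> n L a w)) k = 1 / real n"
  using new_tau_cases by (simp add: aug_update_simps(1) tau_of_cga_update)

lemma aug_inv_step_good:
  assumes n: "4 \<le> n" and L: "1 \<le> L" and inv: "aug_inv n L t a"
    and not_failed: "\<not> failed (aug_update \<epsilon> n L a w)"
  defines "s' \<equiv> fst (aug_update \<epsilon> n L a w)" and "c' \<equiv> stall_count (aug_update \<epsilon> n L a w)"
  shows "\<forall>k<n. half_or_high (1 / real n) (tau_of s' k)"
    and "0 < half_count n (tau_of s') \<Longrightarrow> c' + 1 \<le> L \<and> Suc t \<le> L * (n - half_count n (tau_of s')) + c'"
proof -
  define s where "s = fst a"
  define e where "e = 1 / real n"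
  have e: "0 < e" "e \<le> 1/4"
    using n by (auto simp: e_def field_simps)
  have flags: "\<not> failed a" "\<not> freq_decreased n s s'"
    "\<not> (0 < half_count n (tau_of s) \<and> L \<le> Suc (stall_count a) \<and> \<not> freq_changed n s s')"
    using not_failed by (auto simp: aug_update_simps(2) s_def s'_def)
  have c': "c' = (if freq_changed n s s' then 0 else Suc (stall_count a))"
    by (simp add: aug_update_simps(3) c'_def s_def s'_def)
  have half_or_high: "\<forall>k<n. half_or_high e (tau_of s k)"
    and progress: "0 < half_count n (tau_of s) \<Longrightarrow>
       stall_count a + 1 \<le> L \<and> t \<le> L * (n - half_count n (tau_of s)) + stall_count a"
    using inv flags(1) by (auto simp: aug_inv_def s_def e_def)
  have jumps: "\<forall>k<n. tau_of s' k = tau_of s k \<or> tau_of s' k = 1 - e \<or> tau_of s' k = e"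
    using tau_of_aug_update_cases by (simp add: s'_def s_def e_def)
  have no_decrease: "\<forall>k<n. tau_of s k \<le> tau_of s' k"
    using flags(2) unfolding freq_decreased_def by (meson not_le)
  note jump_lemmas = half_or_high_after_jumps[OF e half_or_high jumps no_decrease]
    half_count_after_jumps_le[OF e half_or_high jumps no_decrease]
    half_count_after_change_less[OF e half_or_high jumps no_decrease]
  show "\<forall>k<n. half_or_high (1 / real n) (tau_of s' k)"
    using jump_lemmas(1) by (simp add: e_def)
  assume "0 < half_count n (tau_of s')"
  then have Q: "0 < half_count n (tau_of s)"
    using jump_lemmas(2) by simp
  show "c' + 1 \<le> L \<and> Suc t \<le> L * (n - half_count n (tau_of s')) + c'"
  proof (cases "freq_changed n s s'")
    case True
    then have "half_count n (tau_of s') < half_count n (tau_of s)"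
      using jump_lemmas(3) by (auto simp: freq_changed_def)
    then have "Suc t \<le> L * (n - half_count n (tau_of s'))"
      using progress[OF Q] progress_after_change half_count_le by blast
    then show ?thesis
      using True c' L by simp
  next
    case False
    then have "half_count n (tau_of s') = half_count n (tau_of s)"
      unfolding half_count_def freq_changed_def by (metis (no_types, lifting))
    then show ?thesis
      using False c' flags(3) Q progress[OF Q] by simp
  qed
qed

lemma aug_inv_step:
  assumes n: "4 \<le> n" and L: "1 \<le> L" and inv: "aug_inv n L t a"
  shows "aug_inv n L (Suc t) (aug_update \<epsilon> n L a w)"
proof -
  define a' where "a' = aug_update \<epsilon> n L a w"
  define s s' where "s = fst a" and "s' = fst a'"
  have s': "s' = cga_update \<epsilon> n s (fst w) (fst (snd w)) (duel_winner w)"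
    by (simp add: s'_def s_def a'_def aug_update_simps)
  have hist': "\<And>k. hist_of s' k =
      (if tau_of s' k \<noteq> tau_of s k then [] else hist_of s k @ [duel_winner w ! k])"
    by (simp add: s' hist_of_cga_update tau_of_cga_update)
  have c': "stall_count a' = (if freq_changed n s s' then 0 else Suc (stall_count a))"
    by (simp add: aug_update_simps(3) a'_def s_def s'_def)
  have iter: "iter_of s = t"
    and lengths: "\<forall>k<n. stall_count a \<le> length (hist_of s k) \<and> length (hist_of s k) \<le> t"
    and found: "\<forall>r. found_of s = Some r \<longrightarrow> r \<le> 2 * t"
    using inv by (auto simp: aug_inv_def s_def)
  have "\<forall>k<n. stall_count a' \<le> length (hist_of s' k) \<and> length (hist_of s' k) \<le> Suc t"
  proof (intro allI impI)
    fix k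
    assume "k < n"
    then show "stall_count a' \<le> length (hist_of s' k) \<and> length (hist_of s' k) \<le> Suc t"
      using c' hist'[of k] lengths by (auto simp: freq_changed_def)
  qed
  moreover have "\<forall>r. found_of s' = Some r \<longrightarrow> r \<le> 2 * Suc t"
    using found iter by (auto simp: s' found_of_cga_update split: option.splits if_splits)
  moreover have "iter_of s' = Suc t"
    using iter by (simp add: s' iter_of_cga_update)
  ultimately show ?thesis
    using aug_inv_step_good[OF n L inv] unfolding aug_inv_def a'_def s'_def by simp
qed

lemma aug_inv_aug_run: "4 \<le> n \<Longrightarrow> 1 \<le> L \<Longrightarrow> a \<in> set_pmf (aug_run \<epsilon> n L t) \<Longrightarrow> aug_inv n L t a"
proof (induction t arbitrary: a)
  case 0
  then show ?case
    using aug_inv_init by simp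
next
  case (Suc t)
  then obtain a0 w where "a0 \<in> set_pmf (aug_run \<epsilon> n L t)" "a = aug_update \<epsilon> n L a0 w"
    using set_aug_run_Suc by blast
  then show ?case
    using Suc aug_inv_step by blast
qed

section \<open>Exponential moments along the history of one bit\<close>

lemma lastk_snoc: "lastk (Suc j) (H @ [b]) = lastk j H @ [b]"
  by (simp add: lastk_def)

lemma lastk_pow2_snoc: "lastk (2^m) (H @ [b]) = lastk (2^m - 1) H @ [b]"
  using lastk_snoc[of "2^m - 1" H b] by simp

lemma zeros_snoc: "zeros (H @ [b]) = zeros H + (if b then 0 else 1)"
  by (simp add: zeros_def)

lemma ones_add_zeros: "ones X + zeros X = length X"
  by (induction X) (auto simp: ones_def zeros_def)

lemma length_lastk: "k \<le> length X \<Longrightarrow> length (lastk k X) = k"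
  by (simp add: lastk_def)

lemma nn_integral_exp_indicator_le:
  fixes M :: "'a pmf"
  assumes "measure_pmf.prob M {w. \<not> P w} \<le> q" "0 \<le> lam"
  shows "(\<integral>\<^sup>+w. ennreal (exp (lam * (if P w then 0 else 1))) \<partial>M) \<le> ennreal (1 + q * (exp lam - 1))"
proof -
  have c0: "0 \<le> exp lam - 1"
    using assms(2) by simp
  have "(\<integral>\<^sup>+w. ennreal (exp (lam * (if P w then 0 else 1))) \<partial>M) =
        (\<integral>\<^sup>+w. 1 + ennreal (exp lam - 1) * indicator {w. \<not> P w} w \<partial>M)"
    using ennreal_plus[of 1 "exp lam - 1"] c0 by (intro nn_integral_cong) (simp add: indicator_def)
  also have "\<dots> = 1 + ennreal (exp lam - 1) * emeasure M {w. \<not> P w}"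
    by (subst nn_integral_add) (auto simp: nn_integral_cmult_indicator)
  also have "\<dots> = ennreal (1 + (exp lam - 1) * measure_pmf.prob M {w. \<not> P w})"
    using c0 by (simp add: measure_pmf.emeasure_eq_measure ennreal_mult ennreal_plus)
  also have "\<dots> \<le> ennreal (1 + q * (exp lam - 1))"
    using mult_left_mono[OF assms(1) c0] by (intro ennreal_leI) (simp add: mult.commute)
  finally show ?thesis .
qed

text \<open>Damping by \<open>M^j\<close>, a bound on the one-step moment generating function of a zero,
  makes this a supermartingale along the window.\<close>
definition window_potential ::
    "(nat \<Rightarrow> aug_state \<Rightarrow> bool) \<Rightarrow> nat \<Rightarrow> real \<Rightarrow> real \<Rightarrow> nat \<Rightarrow> aug_state \<Rightarrow> ennreal" where
  "window_potential I i lam M j a =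
     (if I j a then ennreal (exp (lam * real (zeros (lastk j (hist_of (fst a) i)))) / M ^ j) else 0)"

text \<open>\<open>I j a\<close> says that \<open>a\<close> is \<open>j\<close> iterations into a window throughout which the winner's
  bit \<open>i\<close> was appended to the history of bit \<open>i\<close> and was zero with probability at most \<open>q\<close>.\<close>
locale history_window =
  fixes \<epsilon> :: real and n L i J :: nat and I :: "nat \<Rightarrow> aug_state \<Rightarrow> bool" and q lam M :: real
  assumes window_extends: "\<And>a w j. j < J \<Longrightarrow> w \<in> set_pmf (duel n (fst a)) \<Longrightarrow>
       I (Suc j) (aug_update \<epsilon> n L a w) \<Longrightarrow>
       I j a \<and> hist_of (fst (aug_update \<epsilon> n L a w)) i = hist_of (fst a) i @ [duel_winner w ! i]"
    and zero_prob_le: "\<And>t a j. j \<le> J \<Longrightarrow> a \<in> set_pmf (aug_run \<epsilon> n L t) \<Longrightarrow> I j a \<Longrightarrow>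
       measure_pmf.prob (duel n (fst a)) {w. \<not> duel_winner w ! i} \<le> q"
    and q_nonneg: "0 \<le> q" and lam_nonneg: "0 \<le> lam" and M_def: "M = 1 + q * (exp lam - 1)"
begin

lemma M_ge_1: "1 \<le> M"
  using q_nonneg lam_nonneg by (simp add: M_def)

lemma window_potential_step:
  assumes "j < J" "a \<in> set_pmf (aug_run \<epsilon> n L t)"
  shows "(\<integral>\<^sup>+w. window_potential I i lam M (Suc j) (aug_update \<epsilon> n L a w) \<partial>duel n (fst a))
           \<le> window_potential I i lam M j a"
proof (cases "I j a")
  case False
  have "\<not> I (Suc j) (aug_update \<epsilon> n L a w)" if "w \<in> set_pmf (duel n (fst a))" for w
    using window_extends[OF assms(1) that] False by blast
  then have "(\<integral>\<^sup>+w. window_potential I i lam M (Suc j) (aug_update \<epsilon> n L a w) \<partial>duel n (fst a))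
      = (\<integral>\<^sup>+w. 0 \<partial>duel n (fst a))"
    by (intro nn_integral_cong_AE AE_pmfI) (simp add: window_potential_def)
  then show ?thesis
    by simp
next
  case True
  define E0 where "E0 = exp (lam * real (zeros (lastk j (hist_of (fst a) i)))) / M ^ j"
  have E0: "0 \<le> E0"
    using M_ge_1 by (simp add: E0_def)
  have "window_potential I i lam M (Suc j) (aug_update \<epsilon> n L a w) \<le>
      ennreal (E0 / M) * ennreal (exp (lam * (if duel_winner w ! i then 0 else 1)))"
    if w: "w \<in> set_pmf (duel n (fst a))" for w
  proof (cases "I (Suc j) (aug_update \<epsilon> n L a w)")
    case True
    then have "hist_of (fst (aug_update \<epsilon> n L a w)) i = hist_of (fst a) i @ [duel_winner w ! i]"
      using window_extends[OF assms(1) w] by blast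
    moreover have "exp (lam * real (zeros (lastk (Suc j) (hist_of (fst a) i @ [duel_winner w ! i]))))
          / M ^ Suc j = (E0 / M) * exp (lam * (if duel_winner w ! i then 0 else 1))"
      by (simp add: lastk_snoc zeros_snoc E0_def algebra_simps exp_add)
    ultimately show ?thesis
      using True E0 M_ge_1 by (simp add: window_potential_def ennreal_mult[symmetric])
  qed (simp add: window_potential_def)
  then have "(\<integral>\<^sup>+w. window_potential I i lam M (Suc j) (aug_update \<epsilon> n L a w) \<partial>duel n (fst a))
      \<le> ennreal (E0 / M) * (\<integral>\<^sup>+w. ennreal (exp (lam * (if duel_winner w ! i then 0 else 1))) \<partial>duel n (fst a))"
    by (subst nn_integral_cmult[symmetric]) (auto intro!: nn_integral_mono_AE AE_pmfI)
  also have "\<dots> \<le> ennreal (E0 / M) * ennreal M"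
    using nn_integral_exp_indicator_le[OF zero_prob_le[OF _ assms(2) True] lam_nonneg] assms(1)
    by (intro mult_left_mono) (auto simp: M_def)
  also have "\<dots> = window_potential I i lam M j a"
    using True M_ge_1 E0 by (simp add: window_potential_def E0_def ennreal_mult[symmetric])
  finally show ?thesis .
qed

lemma window_potential_le_1:
  "j \<le> J \<Longrightarrow> (\<integral>\<^sup>+a. window_potential I i lam M j a \<partial>aug_run \<epsilon> n L (t + j)) \<le> 1"
proof (induction j)
  case 0
  have "(\<integral>\<^sup>+a. window_potential I i lam M 0 a \<partial>aug_run \<epsilon> n L t) \<le> (\<integral>\<^sup>+a. 1 \<partial>aug_run \<epsilon> n L t)"
    by (intro nn_integral_mono) (simp add: window_potential_def lastk_def zeros_def)
  then show ?case
    by simp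
next
  case (Suc j)
  have "(\<integral>\<^sup>+a. window_potential I i lam M (Suc j) a \<partial>aug_run \<epsilon> n L (t + Suc j)) =
     (\<integral>\<^sup>+a. (\<integral>\<^sup>+w. window_potential I i lam M (Suc j) (aug_update \<epsilon> n L a w) \<partial>duel n (fst a))
       \<partial>aug_run \<epsilon> n L (t + j))"
    by (simp add: aug_step_def)
  also have "\<dots> \<le> (\<integral>\<^sup>+a. window_potential I i lam M j a \<partial>aug_run \<epsilon> n L (t + j))"
    using Suc.prems by (intro nn_integral_mono_AE AE_pmfI window_potential_step) auto
  also have "\<dots> \<le> 1"
    using Suc by simp
  finally show ?case .
qed

lemma emeasure_window_zeros_ge_le:
  assumes a: "a \<in> set_pmf (aug_run \<epsilon> n L t)"
  shows "emeasure (duel n (fst a))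
           {w. I J a \<and> thr \<le> real (zeros (lastk J (hist_of (fst a) i) @ [duel_winner w ! i]))}
         \<le> ennreal (M ^ Suc J / exp (lam * thr)) * window_potential I i lam M J a"
proof (cases "I J a")
  case True
  define E1 where "E1 = exp (lam * real (zeros (lastk J (hist_of (fst a) i))))"
  let ?S = "{w. I J a \<and> thr \<le> real (zeros (lastk J (hist_of (fst a) i) @ [duel_winner w ! i]))}"
  have "indicator ?S w \<le>
      ennreal (exp (- lam * thr) * E1) * ennreal (exp (lam * (if duel_winner w ! i then 0 else 1)))" for w
  proof (cases "w \<in> ?S")
    case True
    have "exp (- lam * thr) * E1 * exp (lam * (if duel_winner w ! i then 0 else 1))
        = exp (lam * (real (zeros (lastk J (hist_of (fst a) i) @ [duel_winner w ! i])) - thr))"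
      by (simp add: E1_def zeros_snoc exp_add[symmetric] algebra_simps)
    also have "\<dots> \<ge> 1"
      using True lam_nonneg by simp
    finally show ?thesis
      using True by (simp add: ennreal_mult[symmetric] E1_def)
  qed simp
  then have "emeasure (duel n (fst a)) ?S \<le> ennreal (exp (- lam * thr) * E1) *
      (\<integral>\<^sup>+w. ennreal (exp (lam * (if duel_winner w ! i then 0 else 1))) \<partial>duel n (fst a))"
    by (subst nn_integral_cmult[symmetric]) (auto simp flip: nn_integral_indicator intro: nn_integral_mono)
  also have "\<dots> \<le> ennreal (exp (- lam * thr) * E1) * ennreal M"
    using nn_integral_exp_indicator_le[OF zero_prob_le[OF _ a True] lam_nonneg]
    by (intro mult_left_mono) (auto simp: M_def)
  also have "\<dots> = ennreal (M ^ Suc J / exp (lam * thr)) * window_potential I i lam M J a"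
  proof -
    have "exp (- lam * thr) * E1 * M = M ^ Suc J / exp (lam * thr) * (E1 / M ^ J)"
      using M_ge_1 by (simp add: exp_minus field_simps)
    then show ?thesis
      using True M_ge_1 by (simp add: window_potential_def E1_def ennreal_mult[symmetric] mult.assoc)
  qed
  finally show ?thesis .
qed simp

text \<open>Markov's inequality for the exponential moment of the zeros in the window of length
  \<open>J + 1\<close> that ends with the duel of iteration \<open>t + J\<close>.\<close>
lemma prob_window_zeros_ge_le:
  "emeasure (aug_run_duel \<epsilon> n L (t + J))
     {p. I J (fst p) \<and> thr \<le> real (zeros (lastk J (hist_of (fst (fst p)) i) @ [duel_winner (snd p) ! i]))}
     \<le> ennreal (M ^ Suc J / exp (lam * thr))"
proof -
  define c where "c = M ^ Suc J / exp (lam * thr)"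
  have "emeasure (aug_run_duel \<epsilon> n L (t + J))
      {p. I J (fst p) \<and> thr \<le> real (zeros (lastk J (hist_of (fst (fst p)) i) @ [duel_winner (snd p) ! i]))}
      \<le> (\<integral>\<^sup>+a. ennreal c * window_potential I i lam M J a \<partial>aug_run \<epsilon> n L (t + J))"
    unfolding aug_run_duel_def c_def using emeasure_window_zeros_ge_le
    by (simp add: emeasure_bind_pmf vimage_def) (intro nn_integral_mono_AE AE_pmfI, auto)
  also have "\<dots> = ennreal c * (\<integral>\<^sup>+a. window_potential I i lam M J a \<partial>aug_run \<epsilon> n L (t + J))"
    by (rule nn_integral_cmult) auto
  also have "\<dots> \<le> ennreal c"
    using mult_left_mono[OF window_potential_le_1[of J t]] by simp
  finally show ?thesis
    by (simp add: c_def)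
qed

end

section \<open>Chernoff exponents\<close>

lemma mgf_power_le_exp:
  fixes q l :: real
  assumes "0 \<le> q" "0 \<le> l" "l \<le> 1"
  shows "(1 + q * (exp l - 1)) ^ k \<le> exp (k * q * (l + l^2))"
proof -
  have "1 + q * (exp l - 1) \<le> exp (q * (exp l - 1))"
    using exp_ge_add_one_self by simp
  also have "\<dots> \<le> exp (q * (l + l^2))"
    using exp_bound[of l] assms by (simp add: mult_left_mono)
  finally have "(1 + q * (exp l - 1)) ^ k \<le> exp (q * (l + l^2)) ^ k"
    using assms by (intro power_mono) (auto simp: mult_nonneg_nonneg)
  then show ?thesis
    by (simp add: exp_of_nat_mult[symmetric] mult.assoc)
qed

lemma mgf_ratio_le_exp:
  fixes q l \<mu> s :: real
  assumes "0 \<le> q" "0 \<le> l" "l \<le> 1" "\<mu> = k * q"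
  shows "(1 + q * (exp l - 1)) ^ k / exp (l * (\<mu> + s)) \<le> exp (\<mu> * l^2 - l * s)"
proof -
  have "(1 + q * (exp l - 1)) ^ k / exp (l * (\<mu> + s)) \<le> exp (\<mu> * (l + l^2)) / exp (l * (\<mu> + s))"
    using mgf_power_le_exp[OF assms(1-3), of k] assms(4) by (simp add: mult.assoc divide_right_mono)
  also have "\<dots> = exp (\<mu> * l^2 - l * s)"
    by (simp add: exp_diff[symmetric] algebra_simps)
  finally show ?thesis .
qed

lemma optimal_chernoff_exponent_le:
  fixes \<mu> s \<epsilon> lnn :: real
  assumes mu: "0 < \<mu>" and s: "\<epsilon> * sqrt (\<mu> * lnn) \<le> s" and e: "4/3 \<le> \<epsilon>" and lnn: "0 \<le> lnn"
  shows "- (s^2) / (4 * \<mu>) \<le> - (\<epsilon>/3) * lnn"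
proof -
  have "(\<epsilon> * sqrt (\<mu> * lnn))^2 \<le> s^2"
    using s e mu lnn by (intro power_mono) auto
  then have "\<epsilon>^2 * (\<mu> * lnn) \<le> s^2"
    using mu lnn by (simp add: power_mult_distrib)
  then have "\<epsilon>^2 * (\<mu> * lnn) / (4 * \<mu>) \<le> s^2 / (4 * \<mu>)"
    using mu by (intro divide_right_mono) auto
  moreover have "\<epsilon>^2 * (\<mu> * lnn) / (4 * \<mu>) = (\<epsilon>^2/4) * lnn"
    using mu by (simp add: field_simps)
  moreover have "\<epsilon> * (4/3) \<le> \<epsilon> * \<epsilon>"
    using e by (intro mult_left_mono) auto
  then have "(\<epsilon>/3) * lnn \<le> (\<epsilon>^2/4) * lnn"
    using lnn by (intro mult_right_mono) (auto simp: power2_eq_square)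
  ultimately show ?thesis
    by (simp only: minus_divide_left neg_le_iff_le)
qed

lemma exp_moment_upper_tail_le:
  fixes q \<mu> s \<epsilon> lnn :: real
  assumes q: "0 \<le> q" and mu: "\<mu> = k * q" "0 < \<mu>" and e: "\<epsilon> \<ge> 4/3" and lnn: "0 \<le> lnn"
    and s: "s = \<epsilon> * max (sqrt (\<mu> * lnn)) lnn"
  shows "\<exists>l\<ge>0. (1 + q * (exp l - 1)) ^ k / exp (l * (\<mu> + s)) \<le> exp (- (\<epsilon>/3) * lnn)"
proof -
  have s0: "s \<ge> \<epsilon> * lnn" and s1: "s \<ge> \<epsilon> * sqrt (\<mu> * lnn)"
    using s e lnn by (simp_all add: mult_left_mono)
  show ?thesis
  proof (cases "s \<ge> 2 * \<mu>")
    case True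
    have "\<mu> * 1^2 - 1 * s \<le> - (\<epsilon> * lnn) / 2"
      using True s0 by simp
    also have "\<dots> \<le> - (\<epsilon>/3) * lnn"
      using e lnn by simp
    finally show ?thesis
      using mgf_ratio_le_exp[OF q _ _ mu(1), of 1 s]
      by (intro exI[of _ 1]) (auto intro: order_trans)
  next
    case False
    text \<open>The optimal exponent \<open>s / (2 \<mu>)\<close> of the Chernoff bound is at most one here.\<close>
    define l where "l = s / (2 * \<mu>)"
    have l: "0 \<le> l" "l \<le> 1"
      using False mu s e lnn by (simp_all add: l_def)
    have "\<mu> * l^2 - l * s = - (s^2) / (4 * \<mu>)"
      using mu by (simp add: l_def power2_eq_square field_simps)
    also have "\<dots> \<le> - (\<epsilon>/3) * lnn"
      using optimal_chernoff_exponent_le[OF mu(2) s1 e lnn] .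
    finally show ?thesis
      using mgf_ratio_le_exp[OF q l mu(1), of s] l by (intro exI[of _ l]) (auto intro: order_trans)
  qed
qed

lemma sfun_le_of_window_large:
  fixes \<delta> \<epsilon> lnn :: real
  assumes d: "0 < \<delta>" "\<delta> \<le> 1/2" and e: "\<epsilon> > 0" and lnn: "0 \<le> lnn"
    and L: "L \<ge> (2 * \<epsilon>^2 + 8 * \<epsilon>) * lnn / \<delta>^2"
  shows "\<epsilon> * max (sqrt (L/2 * lnn)) lnn \<le> L * \<delta> / 2" and "\<epsilon> * lnn \<le> L * \<delta>^2 / 8"
proof -
  have "0 \<le> (2 * \<epsilon>^2 + 8 * \<epsilon>) * lnn / \<delta>^2"
    using e lnn by simp
  then have L0: "0 \<le> L"
    using L by linarith
  have hL: "(2 * \<epsilon>^2 + 8 * \<epsilon>) * lnn \<le> L * \<delta>^2"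
    using L d by (simp add: pos_divide_le_eq)
  have "0 \<le> 2 * \<epsilon>^2 * lnn" "0 \<le> 8 * \<epsilon> * lnn"
    using e lnn by simp_all
  then have hA: "8 * \<epsilon> * lnn \<le> L * \<delta>^2" and hB: "2 * \<epsilon>^2 * lnn \<le> L * \<delta>^2"
    using hL by (simp_all add: algebra_simps)
  then show "\<epsilon> * lnn \<le> L * \<delta>^2 / 8"
    by simp
  have "\<delta> * \<delta> \<le> \<delta> * (1/2)"
    using d by (intro mult_left_mono) auto
  then have "L * (\<delta> * \<delta>) \<le> L * (\<delta> * (1/2))"
    by (rule mult_left_mono[OF _ L0])
  then have "L * \<delta>^2 \<le> L * \<delta> / 2"
    by (simp add: power2_eq_square)
  moreover have "0 \<le> \<epsilon> * lnn"
    using e lnn by simp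
  ultimately have "\<epsilon> * lnn \<le> L * \<delta> / 2"
    using hA by linarith
  moreover have "\<epsilon> * sqrt (L/2 * lnn) \<le> L * \<delta> / 2"
  proof (rule power2_le_imp_le)
    have "(\<epsilon> * sqrt (L/2 * lnn))^2 = (L/4) * (2 * \<epsilon>^2 * lnn)"
      using L0 lnn by (simp add: power_mult_distrib algebra_simps)
    also have "\<dots> \<le> (L/4) * (L * \<delta>^2)"
      using L0 hB by (intro mult_left_mono) auto
    also have "\<dots> = (L * \<delta> / 2)^2"
      by (simp add: power2_eq_square algebra_simps)
    finally show "(\<epsilon> * sqrt (L/2 * lnn))^2 \<le> (L * \<delta> / 2)^2" .
  qed (use d L0 in simp)
  ultimately show "\<epsilon> * max (sqrt (L/2 * lnn)) lnn \<le> L * \<delta> / 2"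
    by (simp add: max_def)
qed

lemma exp_moment_lower_tail_le:
  fixes \<delta> s \<epsilon> lnn :: real
  assumes d: "0 < \<delta>" "\<delta> \<le> 1/2" and e: "\<epsilon> > 0" and lnn: "0 \<le> lnn"
    and s: "s = \<epsilon> * max (sqrt (L/2 * lnn)) lnn"
    and L: "L \<ge> (2 * \<epsilon>^2 + 8 * \<epsilon>) * lnn / \<delta>^2"
  shows "(1 + (1/2 - \<delta>) * (exp (\<delta>/2) - 1)) ^ L / exp (\<delta>/2 * (L/2 - s)) \<le> exp (- \<epsilon> * lnn)"
proof -
  define l where "l = \<delta>/2"
  have l: "0 \<le> l" "l \<le> 1"
    using d by (auto simp: l_def)
  have s_le: "s \<le> L * \<delta> / 2" and e_le: "\<epsilon> * lnn \<le> L * \<delta>^2 / 8"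
    using sfun_le_of_window_large[OF d e lnn L] s by auto
  have "(1 + (1/2 - \<delta>) * (exp l - 1)) ^ L / exp (l * (L/2 - s))
      \<le> exp (L * (1/2 - \<delta>) * (l + l^2)) / exp (l * (L/2 - s))"
    using mgf_power_le_exp[OF _ l, of "1/2 - \<delta>" L] d by (simp add: divide_right_mono)
  also have "\<dots> = exp (- l * (L * \<delta> - s) + L * (1/2 - \<delta>) * l^2)"
    by (simp add: exp_diff[symmetric] algebra_simps)
  also have "\<dots> \<le> exp (- l * (L * \<delta> / 2) + L * (1/2) * l^2)"
  proof -
    have "L * \<delta> / 2 \<le> L * \<delta> - s"
      using s_le by linarith
    then have "l * (L * \<delta> / 2) \<le> l * (L * \<delta> - s)"
      using l by (intro mult_left_mono) auto
    moreover have "L * (1/2 - \<delta>) * l^2 \<le> L * (1/2) * l^2"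
      using d by (intro mult_right_mono mult_left_mono) auto
    ultimately show ?thesis
      by simp
  qed
  also have "\<dots> = exp (- L * \<delta>^2 / 8)"
    by (simp add: l_def power2_eq_square algebra_simps)
  also have "\<dots> \<le> exp (- \<epsilon> * lnn)"
    using e_le by simp
  finally show ?thesis
    by (simp add: l_def)
qed

section \<open>The probability of failing in one iteration\<close>

lemma prob_duel_winner_bit_False:
  assumes "even n" "i < n" "\<forall>k<n. 0 \<le> tau_of s k \<and> tau_of s k \<le> 1"
  shows "measure_pmf.prob (duel n s) {w. \<not> duel_winner w ! i} =
           1 - winner_bit_prob (map (tau_of s) [0..<n]) i"
proof -
  let ?W = "winner_pmf (map (tau_of s) [0..<n])"
  have "measure_pmf.prob (duel n s) {w. \<not> duel_winner w ! i} =
        measure_pmf.prob (map_pmf duel_winner (duel n s)) {z. \<not> z ! i}"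
    by (simp add: vimage_def)
  also have "map_pmf duel_winner (duel n s) = ?W"
    using sample_winner_eq_winner_pmf[OF assms(1)] by (simp add: duel_def map_bind_pmf map_pmf_comp)
  also have "measure_pmf.prob ?W {z. \<not> z ! i} = 1 - measure_pmf.prob ?W {z. z ! i}"
  proof -
    have "{z. \<not> z ! i} = space (measure_pmf ?W) - {z. z ! i}"
      by auto
    then show ?thesis
      using measure_pmf.prob_compl[of "{z. z ! i}" ?W] by simp
  qed
  also have "\<dots> = 1 - winner_bit_prob (map (tau_of s) [0..<n]) i"
    using assms by (subst prob_winner_pmf_nth) auto
  finally show ?thesis .
qed

lemma one_minus_inverse_power_ge:
  assumes "even n" "2 \<le> n"
  shows "(1 - 1 / real n) ^ n \<ge> 1/4"
proof -
  obtain k where k: "n = 2 * k"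
    using assms by auto
  have "1 + real k * (- 1 / real n) \<le> (1 + - 1 / real n) ^ k"
    using assms by (intro Bernoulli_inequality) simp
  moreover have "1 + real k * (- 1 / real n) = 1/2"
    using k assms by (simp add: field_simps)
  ultimately have "1/2 \<le> (1 - 1 / real n) ^ k"
    by simp
  then have "(1/2)^2 \<le> ((1 - 1 / real n) ^ k)^2"
    by (intro power_mono) auto
  also have "((1 - 1 / real n) ^ k)^2 = (1 - 1 / real n) ^ n"
    unfolding k by (simp add: power_mult[symmetric] mult.commute)
  finally show ?thesis
    by (simp add: power2_eq_square)
qed

lemma aug_run_half_or_high:
  assumes "4 \<le> n" "1 \<le> L" "a \<in> set_pmf (aug_run \<epsilon> n L t)" "\<not> failed a"
  shows "\<forall>k<n. half_or_high (1 / real n) (tau_of (fst a) k)"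
  using aug_inv_aug_run[OF assms(1-3)] assms(4) by (simp add: aug_inv_def)

lemma prob_winner_bit_False_le:
  assumes n: "4 \<le> n" "even n" and L: "1 \<le> L" and a: "a \<in> set_pmf (aug_run \<epsilon> n L t)"
    and "\<not> failed a" "i < n"
  shows "measure_pmf.prob (duel n (fst a)) {w. \<not> duel_winner w ! i} \<le> 1 - tau_of (fst a) i"
proof -
  have e: "0 < 1 / real n" "1 / real n \<le> 1/4"
    using n by (auto simp: field_simps)
  note ok = aug_run_half_or_high[OF n(1) L a \<open>\<not> failed a\<close>]
  have "winner_bit_prob (map (tau_of (fst a)) [0..<n]) i \<ge> tau_of (fst a) i"
    using winner_bit_prob_ge[OF _ _ e, of "map (tau_of (fst a)) [0..<n]" i] ok assms by auto
  then show ?thesis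
    using prob_duel_winner_bit_False[OF n(2) \<open>i < n\<close>] ok half_or_high_bounds[OF e(2) _ e(1)] by simp
qed

definition first_half :: "nat \<Rightarrow> (nat \<Rightarrow> real) \<Rightarrow> nat option" where
  "first_half n \<tau> = (if \<exists>k<n. \<tau> k = 1/2 then Some (LEAST k. k < n \<and> \<tau> k = 1/2) else None)"

lemma first_half_SomeD:
  assumes "first_half n \<tau> = Some i"
  shows "i < n" "\<tau> i = 1/2" "\<forall>k<i. \<tau> k \<noteq> 1/2"
proof -
  have ex: "\<exists>k. k < n \<and> \<tau> k = 1/2" and i: "i = (LEAST k. k < n \<and> \<tau> k = 1/2)"
    using assms by (auto simp: first_half_def split: if_splits)
  show "i < n" "\<tau> i = 1/2"
    unfolding i using LeastI_ex[OF ex] by auto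
  show "\<forall>k<i. \<tau> k \<noteq> 1/2"
    proof (intro allI impI)
    fix k
    assume "k < i"
    then show "\<tau> k \<noteq> 1/2"
      using not_less_Least[of k "\<lambda>k. k < n \<and> \<tau> k = 1/2"] \<open>i < n\<close> unfolding i by simp
  qed
qed

lemma first_half_exists:
  assumes "0 < half_count n \<tau>"
  shows "\<exists>i. first_half n \<tau> = Some i"
proof -
  have "{i. i < n \<and> \<tau> i = 1/2} \<noteq> {}"
    using assms unfolding half_count_def by (metis card.empty less_irrefl)
  then show ?thesis
    by (auto simp: first_half_def)
qed

lemma first_half_cong:
  assumes "\<forall>k<n. \<tau>' k = \<tau> k"
  shows "first_half n \<tau>' = first_half n \<tau>"
proof -
  have "(\<lambda>k. k < n \<and> \<tau>' k = 1/2) = (\<lambda>k. k < n \<and> \<tau> k = 1/2)"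
    using assms by auto
  then show ?thesis
    unfolding first_half_def using assms by auto
qed

text \<open>Since \<open>(1 - 1/n)^(2n) \<ge> 1/16\<close>, the bias of \<open>winner_bit_prob_first_half_ge\<close> is at least
  \<open>1/256\<close> wherever the first frequency \<open>1/2\<close> sits.\<close>
lemma prob_winner_first_half_bit_False_le:
  assumes n: "4 \<le> n" "even n" and L: "1 \<le> L" and a: "a \<in> set_pmf (aug_run \<epsilon> n L t)"
    and "\<not> failed a" and f: "first_half n (tau_of (fst a)) = Some i"
  shows "measure_pmf.prob (duel n (fst a)) {w. \<not> duel_winner w ! i} \<le> 1/2 - 1/256"
proof -
  define e where "e = 1 / real n"
  have e: "0 < e" "e \<le> 1/4"
    using n by (auto simp: e_def field_simps)
  note ok = aug_run_half_or_high[OF n(1) L a \<open>\<not> failed a\<close>, folded e_def]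
  note fi = first_half_SomeD[OF f]
  have "\<forall>k < 2 * (i div 2). map (tau_of (fst a)) [0..<n] ! k = 1 - e"
  proof (intro allI impI)
    fix k
    assume "k < 2 * (i div 2)"
    then have "k < i"
      by linarith
    then have "half_or_high e (tau_of (fst a) k)" "tau_of (fst a) k \<noteq> 1/2"
      using ok fi by auto
    then show "map (tau_of (fst a)) [0..<n] ! k = 1 - e"
      using \<open>k < i\<close> fi by (auto simp: half_or_high_def)
  qed
  then have "winner_bit_prob (map (tau_of (fst a)) [0..<n]) i \<ge> 1/2 + (1 - e)^(4 * (i div 2)) / 16"
    using ok fi e n(2) by (intro winner_bit_prob_first_half_ge) auto
  moreover have "(1 - e)^(4 * (i div 2)) \<ge> 1/16"
  proof -
    have "(1/4)^2 \<le> ((1 - e)^n)^2"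
      using one_minus_inverse_power_ge[OF n(2)] n by (intro power_mono) (auto simp: e_def)
    also have "((1 - e)^n)^2 = (1 - e)^(2 * n)"
      by (simp add: power_mult[symmetric] mult.commute)
    also have "\<dots> \<le> (1 - e)^(4 * (i div 2))"
      using fi e by (intro power_decreasing) auto
    finally show ?thesis
      by (simp add: power2_eq_square)
  qed
  ultimately have "winner_bit_prob (map (tau_of (fst a)) [0..<n]) i \<ge> 1/2 + 1/256"
    by simp
  then show ?thesis
    using prob_duel_winner_bit_False[OF n(2) fi(1)] ok half_or_high_bounds[OF e(2) _ e(1)] by simp
qed

lemma sig_DownD:
  "sig \<epsilon> n p H = Down \<Longrightarrow>
   \<exists>m::nat. 2^m \<le> length H \<and> real (zeros (lastk (2^m) H)) \<ge> 2^m * (1 - p) + sfun \<epsilon> n (2^m * (1 - p))"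
  unfolding sig_def by (auto split: if_splits)

lemma sig_half_UpI:
  "2^m \<le> length H \<Longrightarrow> real (ones (lastk (2^m) H)) \<ge> 2^m * (1/2) + sfun \<epsilon> n (2^m * (1/2)) \<Longrightarrow>
   sig \<epsilon> n (1/2) H = Up"
  unfolding sig_def by auto

lemma hist_of_aug_update_nonempty:
  assumes "hist_of (fst (aug_update \<epsilon> n L a w)) i \<noteq> []"
  shows "tau_of (fst (aug_update \<epsilon> n L a w)) i = tau_of (fst a) i \<and>
         hist_of (fst (aug_update \<epsilon> n L a w)) i = hist_of (fst a) i @ [duel_winner w ! i]"
  using assms by (simp add: aug_update_simps hist_of_cga_update tau_of_cga_update split: if_splits)

lemma failed_aug_update: "failed a \<Longrightarrow> failed (aug_update \<epsilon> n L a w)"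
  by (simp add: aug_update_simps)

definition down_window_event :: "real \<Rightarrow> nat \<Rightarrow> nat \<Rightarrow> nat \<Rightarrow> real \<Rightarrow> (aug_state \<times> duel_result) set" where
  "down_window_event \<epsilon> n i m p = {(a, w). \<not> failed a \<and> tau_of (fst a) i = p \<and>
      2^m \<le> length (hist_of (fst a) i) + 1 \<and>
      2^m * (1 - p) + sfun \<epsilon> n (2^m * (1 - p))
        \<le> real (zeros (lastk (2^m - 1) (hist_of (fst a) i) @ [duel_winner w ! i]))}"

lemma freq_decrease_witness:
  assumes n: "4 \<le> n" and L: "1 \<le> L" and a: "a \<in> set_pmf (aug_run \<epsilon> n L t)" and "\<not> failed a"
    and "freq_decreased n (fst a) (fst (aug_update \<epsilon> n L a w))"
  shows "\<exists>i<n. \<exists>m. \<exists>p\<in>{1/2, 1 - 1 / real n}. (a, w) \<in> down_window_event \<epsilon> n i m p"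
proof -
  obtain i where i: "i < n" and lt: "tau_of (fst (aug_update \<epsilon> n L a w)) i < tau_of (fst a) i"
    using assms(5) by (auto simp: freq_decreased_def)
  define p where "p = tau_of (fst a) i"
  define H where "H = hist_of (fst a) i @ [duel_winner w ! i]"
  have p: "half_or_high (1 / real n) p"
    using aug_run_half_or_high[OF n L a \<open>\<not> failed a\<close>] i by (simp add: p_def)
  have lt': "new_tau \<epsilon> n p H < p"
    using lt by (simp add: aug_update_simps tau_of_cga_update p_def H_def)
  have "sig \<epsilon> n p H = Down"
  proof (cases "sig \<epsilon> n p H")
    case Up
    have "1 / real n \<le> 1/4"
      using n by (simp add: field_simps)
    then show ?thesis
      using Up lt' p by (auto simp: new_tau_def half_or_high_def)
  next
    case Stay
    then show ?thesis
      using lt' by (simp add: new_tau_def)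
  qed
  from sig_DownD[OF this] obtain m where "2^m \<le> length H"
    "real (zeros (lastk (2^m) H)) \<ge> 2^m * (1 - p) + sfun \<epsilon> n (2^m * (1 - p))"
    by blast
  moreover have "p \<in> {1/2, 1 - 1 / real n}"
    using p by (auto simp: half_or_high_def)
  ultimately show ?thesis
    using i \<open>\<not> failed a\<close> unfolding H_def p_def lastk_pow2_snoc down_window_event_def
    by (intro exI[of _ i]) auto
qed

lemma history_window_frequency:
  assumes n: "4 \<le> n" "even n" and L: "1 \<le> L" and i: "i < n" and "p \<le> 1" "0 \<le> l"
  shows "history_window \<epsilon> n L i J
           (\<lambda>j a. \<not> failed a \<and> tau_of (fst a) i = p \<and> j \<le> length (hist_of (fst a) i))
           (1 - p) l (1 + (1 - p) * (exp l - 1))"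
proof unfold_locales
  fix a w j
  assume "\<not> failed (aug_update \<epsilon> n L a w) \<and> tau_of (fst (aug_update \<epsilon> n L a w)) i = p
    \<and> Suc j \<le> length (hist_of (fst (aug_update \<epsilon> n L a w)) i)"
  then show "(\<not> failed a \<and> tau_of (fst a) i = p \<and> j \<le> length (hist_of (fst a) i)) \<and>
      hist_of (fst (aug_update \<epsilon> n L a w)) i = hist_of (fst a) i @ [duel_winner w ! i]"
    using hist_of_aug_update_nonempty[of \<epsilon> n L a w i] failed_aug_update[of a] by fastforce
next
  fix t a j
  assume a: "a \<in> set_pmf (aug_run \<epsilon> n L t)"
    and I: "\<not> failed a \<and> tau_of (fst a) i = p \<and> j \<le> length (hist_of (fst a) i)"
  then show "measure_pmf.prob (duel n (fst a)) {w. \<not> duel_winner w ! i} \<le> 1 - p"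
    using prob_winner_bit_False_le[OF n L a _ i] by simp
qed (use assms in auto)

lemma prob_down_window_event_too_long:
  assumes "4 \<le> n" "1 \<le> L" "i < n" "t + 1 < 2^m"
  shows "measure_pmf.prob (aug_run_duel \<epsilon> n L t) (down_window_event \<epsilon> n i m p) = 0"
proof -
  have "length (hist_of (fst a) i) \<le> t" if "a \<in> set_pmf (aug_run \<epsilon> n L t)" for a
    using aug_inv_aug_run[OF assms(1,2) that] assms(3) by (simp add: aug_inv_def)
  then have "set_pmf (aug_run_duel \<epsilon> n L t) \<inter> down_window_event \<epsilon> n i m p = {}"
    using assms(4) by (fastforce simp: down_window_event_def dest: set_aug_run_duel)
  then show ?thesis
    by (simp add: measure_pmf_zero_iff)
qed

lemma prob_down_window_event_le:
  assumes n: "4 \<le> n" "even n" and L: "1 \<le> L" and i: "i < n" and p: "p \<in> {1/2, 1 - 1 / real n}"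
    and \<epsilon>: "\<epsilon> \<ge> 4/3"
  shows "measure_pmf.prob (aug_run_duel \<epsilon> n L t) (down_window_event \<epsilon> n i m p)
           \<le> exp (- (\<epsilon>/3) * ln (real n))"
proof (cases "2^m \<le> t + 1")
  case True
  define J where "J = (2::nat)^m - 1"
  have tJ: "t - J + J = t"
    using True by (simp add: J_def)
  define q where "q = 1 - p"
  define \<mu> where "\<mu> = real (2^m) * q"
  have q: "0 < q"
    using p n by (auto simp: q_def)
  then obtain l where l: "0 \<le> l"
    "(1 + q * (exp l - 1)) ^ (2^m) / exp (l * (\<mu> + sfun \<epsilon> n \<mu>)) \<le> exp (- (\<epsilon>/3) * ln (real n))"
    using exp_moment_upper_tail_le[of q \<mu> "2^m" \<epsilon> "ln (real n)" "sfun \<epsilon> n \<mu>"] \<epsilon> n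
    by (auto simp: \<mu>_def sfun_def)
  interpret history_window \<epsilon> n L i J
    "\<lambda>j a. \<not> failed a \<and> tau_of (fst a) i = p \<and> j \<le> length (hist_of (fst a) i)"
    q l "1 + q * (exp l - 1)"
    unfolding q_def by (rule history_window_frequency[OF n L i _ l(1)]) (use p in auto)
  have "emeasure (aug_run_duel \<epsilon> n L t) (down_window_event \<epsilon> n i m p)
      \<le> emeasure (aug_run_duel \<epsilon> n L (t - J + J)) {p'. (\<not> failed (fst p') \<and> tau_of (fst (fst p')) i = p
          \<and> J \<le> length (hist_of (fst (fst p')) i))
          \<and> \<mu> + sfun \<epsilon> n \<mu> \<le> real (zeros (lastk J (hist_of (fst (fst p')) i) @ [duel_winner (snd p') ! i]))}"
    unfolding tJ by (intro emeasure_mono) (auto simp: down_window_event_def J_def \<mu>_def q_def)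
  also have "\<dots> \<le> ennreal ((1 + q * (exp l - 1)) ^ Suc J / exp (l * (\<mu> + sfun \<epsilon> n \<mu>)))"
    by (rule prob_window_zeros_ge_le)
  also have "\<dots> \<le> ennreal (exp (- (\<epsilon>/3) * ln (real n)))"
    using l(2) by (intro ennreal_leI) (simp add: J_def)
  finally show ?thesis
    by (simp add: measure_pmf.emeasure_eq_measure)
next
  case False
  then show ?thesis
    using prob_down_window_event_too_long[OF n(1) L i] by simp
qed

definition stall_window_event :: "real \<Rightarrow> nat \<Rightarrow> nat \<Rightarrow> nat \<Rightarrow> (aug_state \<times> duel_result) set" where
  "stall_window_event \<epsilon> n L i = {(a, w). \<not> failed a \<and> L - 1 \<le> stall_count a \<and>
      first_half n (tau_of (fst a)) = Some i \<and>
      real L * (1/2) - sfun \<epsilon> n (real L * (1/2))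
        \<le> real (zeros (lastk (L - 1) (hist_of (fst a) i) @ [duel_winner w ! i]))}"

text \<open>The frequency at the first \<open>1/2\<close> did not go up, so the last \<open>L\<close> winner bits there
  contain few ones and hence many zeros.\<close>
lemma stall_witness:
  assumes n: "4 \<le> n" and L: "L = 2^mL" and a: "a \<in> set_pmf (aug_run \<epsilon> n L t)" "\<not> failed a"
    and "0 < half_count n (tau_of (fst a))" and stall: "L \<le> Suc (stall_count a)"
    and unchanged: "\<not> freq_changed n (fst a) (fst (aug_update \<epsilon> n L a w))"
  shows "\<exists>i<n. (a, w) \<in> stall_window_event \<epsilon> n L i"
proof -
  obtain i where f: "first_half n (tau_of (fst a)) = Some i"
    using first_half_exists assms(5) by blast
  note fi = first_half_SomeD[OF f]
  define H where "H = hist_of (fst a) i @ [duel_winner w ! i]"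
  have "stall_count a \<le> length (hist_of (fst a) i)"
    using aug_inv_aug_run[OF n _ a(1)] fi(1) L by (simp add: aug_inv_def)
  then have len: "2^mL \<le> length H"
    using stall L by (simp add: H_def)
  have window: "lastk (2^mL) H = lastk (L - 1) (hist_of (fst a) i) @ [duel_winner w ! i]"
    by (simp add: H_def lastk_pow2_snoc L)
  have "new_tau \<epsilon> n (tau_of (fst a) i) H = tau_of (fst a) i"
    using unchanged fi(1) by (auto simp: freq_changed_def aug_update_simps tau_of_cga_update H_def)
  then have "new_tau \<epsilon> n (1/2) H = 1/2"
    unfolding fi(2) .
  then have "sig \<epsilon> n (1/2) H \<noteq> Up"
    using n by (auto simp: new_tau_def field_simps)
  then have "real (ones (lastk (2^mL) H)) < 2^mL * (1/2) + sfun \<epsilon> n (2^mL * (1/2))"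
    using sig_half_UpI[OF len, of \<epsilon> n] by linarith
  moreover have "real (ones (lastk (2^mL) H)) + real (zeros (lastk (2^mL) H)) = real L"
    using ones_add_zeros[of "lastk (2^mL) H"] length_lastk[OF len] L
    by (simp only: of_nat_add[symmetric])
  ultimately show ?thesis
    using f fi(1) a(2) stall L window unfolding stall_window_event_def by auto
qed

lemma history_window_stall:
  assumes n: "4 \<le> n" "even n" and L: "1 \<le> L" and i: "i < n"
  shows "history_window \<epsilon> n L i J
           (\<lambda>j a. \<not> failed a \<and> j \<le> stall_count a \<and> first_half n (tau_of (fst a)) = Some i)
           (1/2 - 1/256) (1/512) (1 + (1/2 - 1/256) * (exp (1/512) - 1))"
proof unfold_locales
  fix a w j
  let ?a' = "aug_update \<epsilon> n L a w"
  assume I: "\<not> failed ?a' \<and> Suc j \<le> stall_count ?a' \<and> first_half n (tau_of (fst ?a')) = Some i"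
  then have unchanged: "\<not> freq_changed n (fst a) (fst ?a')"
    by (auto simp: aug_update_simps(3) split: if_splits)
  then have same: "\<forall>k<n. tau_of (fst ?a') k = tau_of (fst a) k"
    by (auto simp: freq_changed_def)
  then have "first_half n (tau_of (fst ?a')) = first_half n (tau_of (fst a))"
    by (rule first_half_cong)
  moreover have "hist_of (fst ?a') i = hist_of (fst a) i @ [duel_winner w ! i]"
    using same i by (simp add: aug_update_simps(1) hist_of_cga_update tau_of_cga_update)
  ultimately show "(\<not> failed a \<and> j \<le> stall_count a \<and> first_half n (tau_of (fst a)) = Some i) \<and>
      hist_of (fst ?a') i = hist_of (fst a) i @ [duel_winner w ! i]"
    using I unchanged by (auto simp: aug_update_simps(2,3))
next
  fix t a j
  assume "a \<in> set_pmf (aug_run \<epsilon> n L t)"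
    and "\<not> failed a \<and> j \<le> stall_count a \<and> first_half n (tau_of (fst a)) = Some i"
  then show "measure_pmf.prob (duel n (fst a)) {w. \<not> duel_winner w ! i} \<le> 1/2 - 1/256"
    using prob_winner_first_half_bit_False_le[OF n L] by blast
qed simp_all

lemma prob_stall_window_event_too_long:
  assumes "4 \<le> n" "1 \<le> L" "i < n" "t < L - 1"
  shows "measure_pmf.prob (aug_run_duel \<epsilon> n L t) (stall_window_event \<epsilon> n L i) = 0"
proof -
  have "stall_count a \<le> t" if "a \<in> set_pmf (aug_run \<epsilon> n L t)" for a
    using aug_inv_aug_run[OF assms(1,2) that] assms(3) by (auto simp: aug_inv_def intro: le_trans)
  then have "set_pmf (aug_run_duel \<epsilon> n L t) \<inter> stall_window_event \<epsilon> n L i = {}"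
    using assms(4) by (fastforce simp: stall_window_event_def dest: set_aug_run_duel)
  then show ?thesis
    by (simp add: measure_pmf_zero_iff)
qed

lemma prob_stall_window_event_le:
  assumes n: "4 \<le> n" "even n" and L: "L = 2^mL" and i: "i < n" and \<epsilon>: "\<epsilon> > 0"
    and L_large: "real L \<ge> (2 * \<epsilon>^2 + 8 * \<epsilon>) * ln (real n) / (1/256)^2"
  shows "measure_pmf.prob (aug_run_duel \<epsilon> n L t) (stall_window_event \<epsilon> n L i)
           \<le> exp (- \<epsilon> * ln (real n))"
proof (cases "L - 1 \<le> t")
  case True
  define J where "J = L - 1"
  define q :: real where "q = 1/2 - 1/256"
  define thr where "thr = real L * (1/2) - sfun \<epsilon> n (real L * (1/2))"
  have L1: "1 \<le> L" and tJ: "t - J + J = t" and SJ: "Suc J = L"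
    using L True by (simp_all add: J_def)
  interpret history_window \<epsilon> n L i J
    "\<lambda>j a. \<not> failed a \<and> j \<le> stall_count a \<and> first_half n (tau_of (fst a)) = Some i"
    q "1/512" "1 + q * (exp (1/512) - 1)"
    unfolding q_def by (rule history_window_stall[OF n L1 i])
  have "emeasure (aug_run_duel \<epsilon> n L t) (stall_window_event \<epsilon> n L i)
      \<le> emeasure (aug_run_duel \<epsilon> n L (t - J + J)) {p. (\<not> failed (fst p) \<and> J \<le> stall_count (fst p)
          \<and> first_half n (tau_of (fst (fst p))) = Some i)
          \<and> thr \<le> real (zeros (lastk J (hist_of (fst (fst p)) i) @ [duel_winner (snd p) ! i]))}"
    unfolding tJ by (intro emeasure_mono) (auto simp: stall_window_event_def J_def thr_def)
  also have "\<dots> \<le> ennreal ((1 + q * (exp (1/512) - 1)) ^ Suc J / exp (1/512 * thr))"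
    by (rule prob_window_zeros_ge_le)
  also have "\<dots> \<le> ennreal (exp (- \<epsilon> * ln (real n)))"
    using exp_moment_lower_tail_le[of "1/256" \<epsilon> "ln (real n)" _ L] n \<epsilon> L_large
    by (intro ennreal_leI) (simp add: SJ q_def thr_def sfun_def)
  finally show ?thesis
    by (simp add: measure_pmf.emeasure_eq_measure)
next
  case False
  then show ?thesis
    using prob_stall_window_event_too_long[OF n(1) _ i] L by simp
qed

lemma prob_aug_run_Suc:
  "measure_pmf.prob (aug_run \<epsilon> n L (Suc t)) A
     = measure_pmf.prob (aug_run_duel \<epsilon> n L t) {p. aug_update \<epsilon> n L (fst p) (snd p) \<in> A}"
  by (simp only: aug_run_Suc_eq_map_aug_run_duel measure_map_pmf) (simp add: vimage_def)

lemma fail_step_cases: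
  assumes n: "4 \<le> n" and L: "L = 2^mL" and aw: "(a, w) \<in> set_pmf (aug_run_duel \<epsilon> n L t)"
    and "\<not> failed a" "failed (aug_update \<epsilon> n L a w)" and t: "Suc t < 2^Mb"
  shows "(\<exists>i<n. \<exists>m<Mb. \<exists>p\<in>{1/2, 1 - 1 / real n}. (a, w) \<in> down_window_event \<epsilon> n i m p)
         \<or> (\<exists>i<n. (a, w) \<in> stall_window_event \<epsilon> n L i)"
proof -
  have L1: "1 \<le> L"
    using L by simp
  have a: "a \<in> set_pmf (aug_run \<epsilon> n L t)"
    using set_aug_run_duel[OF aw] by simp
  from assms(4,5) consider
    (down) "freq_decreased n (fst a) (fst (aug_update \<epsilon> n L a w))"
  | (stall) "0 < half_count n (tau_of (fst a))" "L \<le> Suc (stall_count a)"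
      "\<not> freq_changed n (fst a) (fst (aug_update \<epsilon> n L a w))"
    by (auto simp: aug_update_simps(2))
  then show ?thesis
  proof cases
    case down
    then obtain i m p where imp: "i < n" "p \<in> {1/2, 1 - 1 / real n}" "(a, w) \<in> down_window_event \<epsilon> n i m p"
      using freq_decrease_witness[OF n L1 a \<open>\<not> failed a\<close>] by blast
    have "length (hist_of (fst a) i) \<le> t"
      using aug_inv_aug_run[OF n L1 a] imp(1) by (simp add: aug_inv_def)
    moreover have "2^m \<le> length (hist_of (fst a) i) + 1"
      using imp(3) by (simp add: down_window_event_def)
    ultimately have "(2::nat)^m < 2^Mb"
      using t by linarith
    then have "m < Mb"
      by (simp add: power_strict_increasing_iff)
    then show ?thesis
      using imp by blast
  next
    case stall
    then show ?thesis
      using stall_witness[OF n L a \<open>\<not> failed a\<close>] by blast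
  qed
qed

lemma prob_down_window_events_le:
  assumes n: "4 \<le> n" "even n" and L: "1 \<le> L" and \<epsilon>: "\<epsilon> \<ge> 4/3"
  shows "measure_pmf.prob (aug_run_duel \<epsilon> n L t)
           (\<Union>(i, m, p)\<in>{..<n} \<times> {..<Mb} \<times> {1/2, 1 - 1 / real n}. down_window_event \<epsilon> n i m p)
         \<le> real n * real Mb * 2 * exp (- (\<epsilon>/3) * ln (real n))"
proof -
  let ?P = "measure_pmf.prob (aug_run_duel \<epsilon> n L t)"
  define Idx where "Idx = {..<n} \<times> {..<Mb} \<times> {1/2, 1 - 1 / real n}"
  define D where "D = (\<lambda>(i, m, p). down_window_event \<epsilon> n i m p)"
  have "?P (\<Union>(D ` Idx)) \<le> (\<Sum>x\<in>Idx. ?P (D x))"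
    by (rule measure_pmf.finite_measure_subadditive_finite) (auto simp: Idx_def)
  also have "\<dots> \<le> real (card Idx) * exp (- (\<epsilon>/3) * ln (real n))"
  proof (intro sum_bounded_above)
    fix x
    assume "x \<in> Idx"
    then obtain i m p where "x = (i, m, p)" "i < n" "p \<in> {1/2, 1 - 1 / real n}"
      unfolding Idx_def by (metis SigmaE lessThan_iff)
    then show "?P (D x) \<le> exp (- (\<epsilon>/3) * ln (real n))"
      using prob_down_window_event_le[OF n L _ _ \<epsilon>] by (simp add: D_def)
  qed
  also have "real (card Idx) \<le> real n * real Mb * 2"
  proof -
    have "card {1/2, 1 - 1 / real n} \<le> 2"
      by (rule card_insert_le_m1) auto
    then have "real n * real Mb * real (card {1/2, 1 - 1 / real n}) \<le> real n * real Mb * 2"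
      by (intro mult_left_mono) auto
    then show ?thesis
      by (simp add: Idx_def card_cartesian_product)
  qed
  finally show ?thesis
    by (simp add: Idx_def D_def mult_right_mono)
qed

lemma prob_stall_window_events_le:
  assumes n: "4 \<le> n" "even n" and L: "L = 2^mL" and \<epsilon>: "\<epsilon> > 0"
    and L_large: "real L \<ge> (2 * \<epsilon>^2 + 8 * \<epsilon>) * ln (real n) / (1/256)^2"
  shows "measure_pmf.prob (aug_run_duel \<epsilon> n L t) (\<Union>i<n. stall_window_event \<epsilon> n L i)
         \<le> real n * exp (- \<epsilon> * ln (real n))"
proof -
  let ?P = "measure_pmf.prob (aug_run_duel \<epsilon> n L t)"
  have "?P (\<Union>i<n. stall_window_event \<epsilon> n L i) \<le> (\<Sum>i<n. ?P (stall_window_event \<epsilon> n L i))"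
    by (rule measure_pmf.finite_measure_subadditive_finite) auto
  also have "\<dots> \<le> real n * exp (- \<epsilon> * ln (real n))"
    using prob_stall_window_event_le[OF n L _ \<epsilon> L_large]
    by (subst card_lessThan[symmetric]) (intro sum_bounded_above, auto)
  finally show ?thesis .
qed

lemma prob_fail_step_le:
  assumes n: "4 \<le> n" "even n" and L: "L = 2^mL" and \<epsilon>: "\<epsilon> \<ge> 4/3"
    and L_large: "real L \<ge> (2 * \<epsilon>^2 + 8 * \<epsilon>) * ln (real n) / (1/256)^2"
    and t: "Suc t < 2^Mb"
  shows "measure_pmf.prob (aug_run_duel \<epsilon> n L t) {p. \<not> failed (fst p) \<and> failed (aug_update \<epsilon> n L (fst p) (snd p))}
     \<le> real n * real Mb * 2 * exp (- (\<epsilon>/3) * ln (real n)) + real n * exp (- \<epsilon> * ln (real n))"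
proof -
  let ?P = "measure_pmf.prob (aug_run_duel \<epsilon> n L t)"
  define Down where
    "Down = (\<Union>(i, m, p)\<in>{..<n} \<times> {..<Mb} \<times> {1/2, 1 - 1 / real n}. down_window_event \<epsilon> n i m p)"
  define Stall where "Stall = (\<Union>i<n. stall_window_event \<epsilon> n L i)"
  define A where "A = {p. \<not> failed (fst p) \<and> failed (aug_update \<epsilon> n L (fst p) (snd p))}"
  have "A \<inter> set_pmf (aug_run_duel \<epsilon> n L t) \<subseteq> Down \<union> Stall"
    using fail_step_cases[OF n(1) L _ _ _ t] by (fastforce simp: A_def Down_def Stall_def)
  then have "?P A \<le> ?P (Down \<union> Stall)"
    by (subst measure_Int_set_pmf[symmetric]) (intro measure_pmf.finite_measure_mono, auto)
  also have "\<dots> \<le> ?P Down + ?P Stall"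
    by (rule measure_subadditive) auto
  finally show ?thesis
    using prob_down_window_events_le[OF n _ \<epsilon>, of L t Mb] prob_stall_window_events_le[OF n L _ L_large, of t] L \<epsilon>
    unfolding A_def Down_def Stall_def by simp
qed

lemma prob_failed_le:
  assumes n: "4 \<le> n" "even n" and L: "L = 2^mL" and \<epsilon>: "\<epsilon> \<ge> 4/3"
    and L_large: "real L \<ge> (2 * \<epsilon>^2 + 8 * \<epsilon>) * ln (real n) / (1/256)^2"
    and t: "t < 2^Mb"
  shows "measure_pmf.prob (aug_run \<epsilon> n L t) {a. failed a}
     \<le> real t * (real n * real Mb * 2 * exp (- (\<epsilon>/3) * ln (real n)) + real n * exp (- \<epsilon> * ln (real n)))"
  using t
proof (induction t)
  case (Suc t)
  let ?P = "measure_pmf.prob (aug_run_duel \<epsilon> n L t)"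
  have "measure_pmf.prob (aug_run \<epsilon> n L (Suc t)) {a. failed a}
      = ?P {p. failed (aug_update \<epsilon> n L (fst p) (snd p))}"
    by (simp only: prob_aug_run_Suc mem_Collect_eq)
  also have "\<dots> \<le> ?P ({p. failed (fst p)} \<union> {p. \<not> failed (fst p) \<and> failed (aug_update \<epsilon> n L (fst p) (snd p))})"
    by (intro measure_pmf.finite_measure_mono) auto
  also have "\<dots> \<le> ?P {p. failed (fst p)} + ?P {p. \<not> failed (fst p) \<and> failed (aug_update \<epsilon> n L (fst p) (snd p))}"
    by (rule measure_subadditive) auto
  also have "?P {p. failed (fst p)} = measure_pmf.prob (aug_run \<epsilon> n L t) {a. failed a}"
    by (simp flip: map_fst_aug_run_duel add: vimage_def)
  finally show ?case
    using Suc prob_fail_step_le[OF n L \<epsilon> L_large Suc.prems] by (simp add: algebra_simps)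
qed simp

section \<open>Sampling the optimum once all frequencies are high\<close>

lemma prob_duel_misses_optimum_le:
  assumes n: "4 \<le> n" "even n" and high: "\<forall>k<n. tau_of s k = 1 - 1 / real n"
  shows "measure_pmf.prob (duel n s) {w. fst w \<noteq> all_ones n} \<le> 3/4"
proof -
  have "map (tau_of s) [0..<n] = replicate n (1 - 1 / real n)"
    using high by (simp add: list_eq_iff_nth_eq)
  then have "pmf (sample_ind n (tau_of s)) (all_ones n) = (1 - 1 / real n) ^ n"
    using pmf_bernoulli_list_all_True[of "replicate n (1 - 1 / real n)"] n
    by (simp add: sample_ind_def sample_bits_eq_bernoulli_list all_ones_def)
  moreover have "map_pmf fst (duel n s) = sample_ind n (tau_of s)"
    by (simp add: duel_def map_bind_pmf map_pmf_comp bind_return_pmf')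
  moreover have "measure_pmf.prob (duel n s) {w. fst w = all_ones n}
      = measure_pmf.prob (map_pmf fst (duel n s)) {all_ones n}"
    by (simp add: vimage_def)
  ultimately have "measure_pmf.prob (duel n s) {w. fst w = all_ones n} = (1 - 1 / real n) ^ n"
    by (simp add: measure_pmf_single)
  moreover have "{w. fst w \<noteq> all_ones n} = space (measure_pmf (duel n s)) - {w. fst w = all_ones n}"
    by auto
  ultimately have "measure_pmf.prob (duel n s) {w. fst w \<noteq> all_ones n} = 1 - (1 - 1 / real n) ^ n"
    using measure_pmf.prob_compl[of "{w. fst w = all_ones n}" "duel n s"] by simp
  then show ?thesis
    using one_minus_inverse_power_ge[OF n(2)] n by simp
qed

lemma aug_inv_all_high:
  assumes inv: "aug_inv n L t a" and "\<not> failed a" and t: "L * n \<le> t" and n: "1 \<le> n"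
  shows "\<forall>k<n. tau_of (fst a) k = 1 - 1 / real n"
proof -
  have "half_count n (tau_of (fst a)) = 0"
  proof (rule ccontr)
    assume "half_count n (tau_of (fst a)) \<noteq> 0"
    then have Q: "0 < half_count n (tau_of (fst a))"
      by simp
    then have "stall_count a + 1 \<le> L" "t \<le> L * (n - half_count n (tau_of (fst a))) + stall_count a"
      using inv \<open>\<not> failed a\<close> by (auto simp: aug_inv_def)
    moreover have "L * (n - half_count n (tau_of (fst a))) \<le> L * (n - 1)"
      using Q by (intro mult_left_mono) auto
    moreover have "L * (n - 1) + L = L * n"
      using n by (cases n) (auto simp: algebra_simps)
    ultimately show False
      using t by linarith
  qed
  then have "\<forall>k<n. tau_of (fst a) k \<noteq> 1/2"
    by (simp add: half_count_def)
  moreover have "\<forall>k<n. half_or_high (1 / real n) (tau_of (fst a) k)"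
    using inv \<open>\<not> failed a\<close> by (simp add: aug_inv_def)
  ultimately show ?thesis
    by (simp add: half_or_high_def)
qed

lemma found_of_aug_update: "found_of (fst a) = Some r \<Longrightarrow> found_of (fst (aug_update \<epsilon> n L a w)) = Some r"
  by (simp add: aug_update_simps found_of_cga_update)

lemma found_of_aug_update_None: "found_of (fst (aug_update \<epsilon> n L a w)) = None \<Longrightarrow> fst w \<noteq> all_ones n"
  by (auto simp: aug_update_simps found_of_cga_update split: option.splits if_splits)

lemma failed_or_found_aug_update:
  assumes "failed a \<or> found_of (fst a) \<noteq> None"
  shows "failed (aug_update \<epsilon> n L a w) \<or> found_of (fst (aug_update \<epsilon> n L a w)) \<noteq> None"
proof (cases "failed a")
  case True
  then show ?thesis
    using failed_aug_update by blast
next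
  case False
  then obtain r where "found_of (fst a) = Some r"
    using assms by auto
  then show ?thesis
    using found_of_aug_update by simp
qed

lemma emeasure_aug_step_not_found_le:
  assumes n: "4 \<le> n" "even n" and L: "1 \<le> L" and t: "L * n \<le> t"
    and a: "a \<in> set_pmf (aug_run \<epsilon> n L t)" "\<not> failed a"
  shows "emeasure (aug_step \<epsilon> n L a) {a. \<not> failed a \<and> found_of (fst a) = None} \<le> ennreal (3/4)"
proof -
  let ?S = "{a. \<not> failed a \<and> found_of (fst a) = None}"
  have "\<forall>k<n. tau_of (fst a) k = 1 - 1 / real n"
    using aug_inv_all_high[OF aug_inv_aug_run[OF n(1) L a(1)] a(2) t] n by simp
  then have "emeasure (duel n (fst a)) {w. fst w \<noteq> all_ones n} \<le> ennreal (3/4)"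
    using prob_duel_misses_optimum_le[OF n] by (simp add: measure_pmf.emeasure_eq_measure)
  moreover have "aug_update \<epsilon> n L a -` ?S \<subseteq> {w. fst w \<noteq> all_ones n}"
  proof
    fix w
    assume "w \<in> aug_update \<epsilon> n L a -` ?S"
    then have "found_of (fst (aug_update \<epsilon> n L a w)) = None"
      by simp
    then show "w \<in> {w. fst w \<noteq> all_ones n}"
      using found_of_aug_update_None by blast
  qed
  then have "emeasure (duel n (fst a)) (aug_update \<epsilon> n L a -` ?S)
      \<le> emeasure (duel n (fst a)) {w. fst w \<noteq> all_ones n}"
    by (rule emeasure_mono) simp
  ultimately show ?thesis
    by (simp add: aug_step_def)
qed

lemma prob_not_found_step_le:
  assumes n: "4 \<le> n" "even n" and L: "1 \<le> L" and t: "L * n \<le> t"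
  defines "S \<equiv> {a. \<not> failed a \<and> found_of (fst a) = None}"
  shows "measure_pmf.prob (aug_run \<epsilon> n L (Suc t)) S \<le> 3/4 * measure_pmf.prob (aug_run \<epsilon> n L t) S"
proof -
  have step: "emeasure (aug_step \<epsilon> n L a) S \<le> ennreal (3/4) * indicator S a"
    if a: "a \<in> set_pmf (aug_run \<epsilon> n L t)" for a
  proof (cases "a \<in> S")
    case False
    have "aug_update \<epsilon> n L a w \<notin> S" for w
      using failed_or_found_aug_update[of a \<epsilon> n L w] False by (simp add: S_def)
    then have "aug_update \<epsilon> n L a -` S = {}"
      by blast
    then show ?thesis
      using False by (simp add: aug_step_def)
  next
    case True
    then show ?thesis
      using emeasure_aug_step_not_found_le[OF n L t a] by (simp add: S_def)
  qed
  have "emeasure (aug_run \<epsilon> n L (Suc t)) S = (\<integral>\<^sup>+a. emeasure (aug_step \<epsilon> n L a) S \<partial>aug_run \<epsilon> n L t)"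
    by simp
  also have "\<dots> \<le> (\<integral>\<^sup>+a. ennreal (3/4) * indicator S a \<partial>aug_run \<epsilon> n L t)"
    using step by (intro nn_integral_mono_AE AE_pmfI) auto
  also have "\<dots> = ennreal (3/4) * emeasure (aug_run \<epsilon> n L t) S"
    by (rule nn_integral_cmult_indicator) auto
  finally show ?thesis
    by (simp add: measure_pmf.emeasure_eq_measure ennreal_mult[symmetric])
qed

lemma prob_not_found_le:
  assumes "4 \<le> n" "even n" "1 \<le> L"
  shows "measure_pmf.prob (aug_run \<epsilon> n L (L * n + k)) {a. \<not> failed a \<and> found_of (fst a) = None}
           \<le> (3/4)^k"
proof (induction k)
  case (Suc k)
  then show ?case
    using prob_not_found_step_le[OF assms, of "L * n + k" \<epsilon>] by simp
qed simp

lemma prob_found_mono: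
  "measure_pmf.prob (aug_run \<epsilon> n L t) {a. \<exists>r. found_of (fst a) = Some r \<and> r \<le> R}
   \<le> measure_pmf.prob (aug_run \<epsilon> n L (t + d)) {a. \<exists>r. found_of (fst a) = Some r \<and> r \<le> R}"
proof (induction d)
  case (Suc d)
  define E :: "aug_state set" where "E = {a. \<exists>r. found_of (fst a) = Some r \<and> r \<le> R}"
  have "indicator E a \<le> emeasure (aug_step \<epsilon> n L a) E" for a
  proof (cases "a \<in> E")
    case True
    then obtain r where "found_of (fst a) = Some r" "r \<le> R"
      by (auto simp: E_def)
    then have "aug_update \<epsilon> n L a -` E = UNIV"
      using found_of_aug_update by (auto simp: E_def)
    then show ?thesis
      using True by (simp add: aug_step_def)
  qed simp
  then have "(\<integral>\<^sup>+a. indicator E a \<partial>aug_run \<epsilon> n L (t + d))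
      \<le> (\<integral>\<^sup>+a. emeasure (aug_step \<epsilon> n L a) E \<partial>aug_run \<epsilon> n L (t + d))"
    by (intro nn_integral_mono) auto
  then have "emeasure (aug_run \<epsilon> n L (t + d)) E \<le> emeasure (aug_run \<epsilon> n L (t + Suc d)) E"
    by simp
  then show ?case
    using Suc by (simp add: E_def measure_pmf.emeasure_eq_measure)
qed simp

section \<open>The runtime bound\<close>

lemma prob_runtime_le_ge_found:
  assumes n: "4 \<le> n" and L: "1 \<le> L" and TR: "2 * real T \<le> TR"
  shows "prob_runtime_le \<epsilon> n TR \<ge> 1 - measure_pmf.prob (aug_run \<epsilon> n L T) {a. found_of (fst a) = None}"
proof -
  define N where "N = nat \<lceil>TR\<rceil>"
  define E :: "aug_state set" where "E = {a. \<exists>r. found_of (fst a) = Some r \<and> r \<le> 2 * T}"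
  have NT: "T \<le> N"
    using TR unfolding N_def by linarith
  have "{a. found_of (fst a) \<noteq> None} = space (measure_pmf (aug_run \<epsilon> n L T)) - {a. found_of (fst a) = None}"
    by auto
  then have "1 - measure_pmf.prob (aug_run \<epsilon> n L T) {a. found_of (fst a) = None}
      = measure_pmf.prob (aug_run \<epsilon> n L T) {a. found_of (fst a) \<noteq> None}"
    using measure_pmf.prob_compl[of "{a. found_of (fst a) = None}" "aug_run \<epsilon> n L T"] by simp
  also have "\<dots> = measure_pmf.prob (aug_run \<epsilon> n L T) ({a. found_of (fst a) \<noteq> None} \<inter> set_pmf (aug_run \<epsilon> n L T))"
    by (simp add: measure_Int_set_pmf)
  also have "\<dots> \<le> measure_pmf.prob (aug_run \<epsilon> n L T) E"
    using aug_inv_aug_run[OF n L] by (intro measure_pmf.finite_measure_mono) (auto simp: E_def aug_inv_def)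
  also have "\<dots> \<le> measure_pmf.prob (aug_run \<epsilon> n L N) E"
    using prob_found_mono[of \<epsilon> n L T "2 * T" "N - T"] NT by (simp add: E_def)
  also have "\<dots> \<le> measure_pmf.prob (aug_run \<epsilon> n L N) {a. \<exists>r. found_of (fst a) = Some r \<and> real r \<le> TR}"
    using TR by (intro measure_pmf.finite_measure_mono) (auto simp: E_def)
  also have "\<dots> = prob_runtime_le \<epsilon> n TR"
    by (simp add: prob_runtime_le_def N_def vimage_def flip: map_fst_aug_run[of \<epsilon> n L])
  finally show ?thesis .
qed

lemma prob_runtime_le_ge:
  assumes n: "4 \<le> n" "even n" and L: "L = 2^mL" and \<epsilon>: "\<epsilon> \<ge> 4/3"
    and L_large: "real L \<ge> (2 * \<epsilon>^2 + 8 * \<epsilon>) * ln (real n) / (1/256)^2"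
    and T: "T = L * n + k" "T < 2^Mb" and TR: "2 * real T \<le> TR"
  shows "prob_runtime_le \<epsilon> n TR \<ge> 1 - (real T * (real n * real Mb * 2 * exp (- (\<epsilon>/3) * ln (real n))
           + real n * exp (- \<epsilon> * ln (real n))) + (3/4)^k)"
proof -
  let ?P = "measure_pmf.prob (aug_run \<epsilon> n L T)"
  have L1: "1 \<le> L"
    using L by simp
  have "?P {a. found_of (fst a) = None} \<le> ?P ({a. failed a} \<union> {a. \<not> failed a \<and> found_of (fst a) = None})"
    by (intro measure_pmf.finite_measure_mono) auto
  also have "\<dots> \<le> ?P {a. failed a} + ?P {a. \<not> failed a \<and> found_of (fst a) = None}"
    by (rule measure_subadditive) auto
  also have "?P {a. failed a} \<le> real T * (real n * real Mb * 2 * exp (- (\<epsilon>/3) * ln (real n))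
      + real n * exp (- \<epsilon> * ln (real n)))"
    by (rule prob_failed_le[OF n L \<epsilon> L_large T(2)])
  also have "?P {a. \<not> failed a \<and> found_of (fst a) = None} \<le> (3/4)^k"
    using prob_not_found_le[OF n L1, of \<epsilon> k] T(1) by simp
  finally show ?thesis
    using prob_runtime_le_ge_found[OF n(1) L1 TR, of \<epsilon>] by linarith
qed

section \<open>Choice of the parameters\<close>

lemma ex_pow2_between:
  fixes x :: real
  assumes "0 \<le> x"
  shows "\<exists>m. x \<le> 2^m \<and> 2^m \<le> 2 * x + 1"
proof -
  obtain m0 :: nat where "x < 2^m0"
    using real_arch_pow[of 2 x] by auto
  define m where "m = (LEAST m. x \<le> 2^m)"
  have "x \<le> 2^m"
    unfolding m_def by (rule LeastI[of _ m0]) (use \<open>x < 2^m0\<close> in linarith)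
  moreover have "2^m \<le> 2 * x + 1"
  proof (cases m)
    case 0
    then show ?thesis
      using assms by simp
  next
    case (Suc k)
    then have "k < m"
      by simp
    then have "\<not> x \<le> 2^k"
      unfolding m_def by (rule not_less_Least)
    then show ?thesis
      using Suc by simp
  qed
  ultimately show ?thesis
    by blast
qed

lemma ex_pow2_gt_le_double:
  fixes T :: nat
  assumes "1 \<le> T"
  shows "\<exists>m. T < 2^m \<and> 2^m \<le> 2 * T"
proof -
  define m where "m = (LEAST m. T < 2^m)"
  have "T < 2^m"
    unfolding m_def by (rule LeastI[of _ T]) (rule less_exp)
  moreover have "2^m \<le> 2 * T"
  proof (cases m)
    case 0
    then show ?thesis
      using assms by simp
  next
    case (Suc k)
    then have "k < m"
      by simp
    then have "\<not> T < 2^k"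
      unfolding m_def by (rule not_less_Least)
    then show ?thesis
      using Suc by simp
  qed
  ultimately show ?thesis
    by blast
qed

lemma ex_pow2_gt_log_bound:
  fixes T :: nat and C x :: real
  assumes "1 \<le> T" "real T \<le> C * x^2" "1 \<le> C" "1 \<le> x"
  shows "\<exists>m. T < 2^m \<and> real m \<le> 1 + 2 * ln C + 4 * ln x"
proof -
  obtain m where m: "T < 2^m" "2^m \<le> 2 * T"
    using ex_pow2_gt_le_double[OF assms(1)] by blast
  have "(2::real)^m \<le> 2 * real T"
    using m(2) by (metis of_nat_le_iff of_nat_mult of_nat_numeral of_nat_power)
  then have "real m * ln 2 \<le> ln (2 * (C * x^2))"
    using assms by (subst ln_realpow[symmetric]) (auto simp del: ln_realpow)
  also have "\<dots> = ln 2 + ln C + 2 * ln x"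
    using assms by (simp add: ln_mult ln_realpow)
  finally have m_ln2: "(real m - 1) * ln 2 \<le> ln C + 2 * ln x"
    by (simp add: algebra_simps)
  have "(real m - 1) / 2 \<le> ln C + 2 * ln x"
  proof (cases "1 \<le> real m")
    case True
    have "1/2 \<le> ln (2::real)"
      by (subst ln_ge_iff) (auto simp: exp_half_le2)
    then have "(real m - 1) * (1/2) \<le> (real m - 1) * ln 2"
      using True by (intro mult_left_mono) auto
    then show ?thesis
      using m_ln2 by simp
  next
    case False
    moreover have "0 \<le> ln C" "0 \<le> ln x"
      using assms by simp_all
    ultimately show ?thesis
      by simp
  qed
  then show ?thesis
    using m(1) by (intro exI[of _ m]) simp
qed

lemma geometric_le_exp:
  assumes "0 \<le> c"
  shows "(3/4::real) ^ nat \<lceil>4 * c\<rceil> \<le> exp (- c)"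
proof -
  have "ln (3/4::real) \<le> - 1/4"
    using ln_le_minus_one[of "3/4"] by simp
  then have "real (nat \<lceil>4 * c\<rceil>) * ln (3/4) \<le> real (nat \<lceil>4 * c\<rceil>) * (- 1/4)"
    by (intro mult_left_mono) auto
  also have "\<dots> \<le> - c"
    using assms by linarith
  finally have "exp (real (nat \<lceil>4 * c\<rceil>) * ln (3/4)) \<le> exp (- c)"
    by simp
  then show ?thesis
    by (simp add: exp_of_nat_mult)
qed

lemma iteration_budget_le:
  fixes K \<epsilon> x y a b :: real
  assumes x: "1 \<le> x" and y: "1 \<le> y" and "0 \<le> \<epsilon>" "a \<le> 2 * (K * x) + 1" "b \<le> 4 * \<epsilon> * x + 1"
  shows "a * y + b \<le> (2 * K + 4 * \<epsilon> + 2) * y * x"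
proof -
  have "a * y \<le> (2 * (K * x) + 1) * y"
    using assms y by (intro mult_right_mono) auto
  also have "\<dots> \<le> (2 * K + 1) * x * y"
    using x y by (intro mult_right_mono) (auto simp: algebra_simps)
  finally have "a * y \<le> (2 * K + 1) * x * y" .
  moreover have "b \<le> (4 * \<epsilon> + 1) * x"
    using assms by (simp add: algebra_simps)
  moreover have "(4 * \<epsilon> + 1) * x \<le> (4 * \<epsilon> + 1) * x * y"
    using mult_left_mono[of 1 y "(4 * \<epsilon> + 1) * x"] assms by simp
  ultimately show ?thesis
    by (simp add: algebra_simps)
qed

lemma runtime_parameters:
  fixes \<epsilon> K C :: real and n :: nat
  assumes \<epsilon>: "0 < \<epsilon>" and K: "0 \<le> K" and C: "C = 2 * K + 4 * \<epsilon> + 2"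
    and n: "4 \<le> n" and lnn: "2 * ln C + 1 \<le> ln (real n)"
  shows "\<exists>mL k Mb. K * ln (real n) \<le> 2^mL \<and> real (2^mL * n + k) \<le> C * real n * ln (real n)
           \<and> 2^mL * n + k < 2^Mb \<and> real Mb \<le> 5 * ln (real n) \<and> (3/4)^k \<le> exp (- \<epsilon> * ln (real n))"
proof -
  define x where "x = ln (real n)"
  have C1: "1 \<le> C"
    using C K \<epsilon> by simp
  then have "0 \<le> ln C"
    by simp
  then have x1: "1 \<le> x"
    using lnn by (simp add: x_def)
  have x_le: "x \<le> real n"
    using ln_le_minus_one[of "real n"] n by (simp add: x_def)
  obtain mL where mL: "K * x \<le> 2^mL" "2^mL \<le> 2 * (K * x) + 1"
    using ex_pow2_between[of "K * x"] K x1 by auto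
  define k where "k = nat \<lceil>4 * (\<epsilon> * x)\<rceil>"
  have k: "real k \<le> 4 * \<epsilon> * x + 1"
    using \<epsilon> x1 by (simp add: k_def) linarith
  define T where "T = 2^mL * n + k"
  have "real T \<le> (2 * K + 4 * \<epsilon> + 2) * real n * x"
    using iteration_budget_le[OF x1 _ _ mL(2) k] n \<epsilon> by (simp add: T_def)
  then have T: "real T \<le> C * real n * x"
    by (simp add: C)
  also have "\<dots> \<le> C * real n * real n"
    using x_le C1 by (intro mult_left_mono) auto
  finally have "real T \<le> C * real n ^ 2"
    by (simp add: power2_eq_square)
  moreover have "1 \<le> T"
    using n by (simp add: T_def Suc_le_eq)
  ultimately obtain Mb where Mb: "T < 2^Mb" "real Mb \<le> 1 + 2 * ln C + 4 * x"
    using ex_pow2_gt_log_bound[of T C "real n"] C1 n by (auto simp: x_def)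
  have "real Mb \<le> 5 * x"
    using Mb(2) lnn by (simp add: x_def)
  moreover have "(3/4)^k \<le> exp (- \<epsilon> * x)"
    using geometric_le_exp[of "\<epsilon> * x"] \<epsilon> x1 by (simp add: k_def)
  ultimately show ?thesis
    using mL(1) T Mb(1) unfolding x_def T_def by blast
qed

lemma failure_bound_arith:
  fixes x lnx T Mb E1 E3 G C :: real
  assumes x: "1 \<le> x" and l: "1 \<le> lnx" and T: "0 \<le> T" "T \<le> C * x * lnx"
    and Mb: "0 \<le> Mb" "Mb \<le> 5 * lnx" and E: "0 \<le> E1" "E1 \<le> E3" "G \<le> E1" and C: "0 \<le> C"
  shows "T * (x * Mb * 2 * E3 + x * E1) + G \<le> (11 * C + 1) * (x^2 * E3) * lnx^2"
proof -
  have E3: "0 \<le> E3"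
    using E by simp
  have "T * (x * Mb * 2 * E3) \<le> (C * x * lnx) * (x * (5 * lnx) * 2 * E3)"
    using T Mb x E3 by (intro mult_mono mult_right_mono mult_left_mono) auto
  also have "\<dots> = 10 * C * (x^2 * E3) * lnx^2"
    by (simp add: power2_eq_square algebra_simps)
  finally have a: "T * (x * Mb * 2 * E3) \<le> 10 * C * (x^2 * E3) * lnx^2" .
  have "T * (x * E1) \<le> (C * x * lnx) * (x * E3)"
    using T E x by (intro mult_mono mult_left_mono) auto
  also have "\<dots> \<le> C * (x^2 * E3) * lnx^2"
  proof -
    have "lnx \<le> lnx^2"
      using l by (simp add: power2_eq_square)
    then have "C * (x^2 * E3) * lnx \<le> C * (x^2 * E3) * lnx^2"
      using C E3 by (intro mult_left_mono) auto
    then show ?thesis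
      by (simp add: power2_eq_square algebra_simps)
  qed
  finally have b: "T * (x * E1) \<le> C * (x^2 * E3) * lnx^2" .
  have "1 \<le> x^2" "1 \<le> lnx^2"
    using x l by (simp_all add: one_le_power)
  then have "1 * 1 \<le> x^2 * lnx^2"
    by (intro mult_mono) auto
  then have "1 \<le> x^2 * lnx^2"
    by simp
  then have c: "G \<le> (x^2 * E3) * lnx^2"
    using E E3 mult_left_mono[of 1 "x^2 * lnx^2" E3] by (simp add: algebra_simps)
  show ?thesis
    using a b c by (simp add: algebra_simps)
qed

lemma powr_two_minus:
  fixes x a :: real
  assumes "0 < x"
  shows "x powr (2 - a) = x^2 * exp (- a * ln x)"
proof -
  have "x powr (2 - a) = x powr 2 / x powr a"
    by (rule powr_diff)
  also have "x powr 2 = x^2"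
    using assms by (simp add: powr_numeral)
  also have "x powr a = exp (a * ln x)"
    using assms by (simp add: powr_def)
  finally show ?thesis
    by (simp add: exp_minus divide_inverse)
qed

lemma prob_runtime_le_ge_powr:
  assumes n: "4 \<le> n" "even n" and \<epsilon>: "4/3 \<le> \<epsilon>" and lnn: "1 \<le> ln (real n)" and C: "1 \<le> C"
    and L_large: "(2 * \<epsilon>^2 + 8 * \<epsilon>) * ln (real n) / (1/256)^2 \<le> 2^mL"
    and T: "real (2^mL * n + k) \<le> C * real n * ln (real n)" "2^mL * n + k < 2^Mb"
    and Mb: "real Mb \<le> 5 * ln (real n)" and k: "(3/4)^k \<le> exp (- \<epsilon> * ln (real n))"
  shows "prob_runtime_le \<epsilon> n (2 * C * real n * ln (real n))
           \<ge> 1 - (11 * C + 1) * real n powr (2 - \<epsilon> / 3) * (ln (real n))^2"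
proof -
  have runtime: "prob_runtime_le \<epsilon> n (2 * C * real n * ln (real n))
      \<ge> 1 - (real (2^mL * n + k) * (real n * real Mb * 2 * exp (- (\<epsilon>/3) * ln (real n))
            + real n * exp (- \<epsilon> * ln (real n))) + (3/4)^k)"
    using L_large T by (intro prob_runtime_le_ge[OF n refl \<epsilon> _ refl]) simp_all
  have "exp (- \<epsilon> * ln (real n)) \<le> exp (- (\<epsilon>/3) * ln (real n))"
    using \<epsilon> lnn by simp
  then have failure: "real (2^mL * n + k) * (real n * real Mb * 2 * exp (- (\<epsilon>/3) * ln (real n))
        + real n * exp (- \<epsilon> * ln (real n))) + (3/4)^k
      \<le> (11 * C + 1) * ((real n)^2 * exp (- (\<epsilon>/3) * ln (real n))) * (ln (real n))^2"
    using failure_bound_arith[OF _ lnn _ T(1) _ Mb _ _ k] n C by simp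
  have powr: "real n powr (2 - \<epsilon> / 3) = (real n)^2 * exp (- (\<epsilon>/3) * ln (real n))"
    using n by (intro powr_two_minus) simp
  show ?thesis
    unfolding powr using runtime failure by linarith
qed

theorem theorem24:
  fixes \<epsilon> :: real
  assumes "\<epsilon> > 6"
  shows "\<exists>C c :: real. \<exists>N0 :: nat. \<forall>n \<ge> N0. even n \<longrightarrow>
           prob_runtime_le \<epsilon> n (C * real n * ln (real n))
             \<ge> 1 - c * real n powr (2 - \<epsilon> / 3) * (ln (real n))^2"
proof -
  define K :: real where "K = (2 * \<epsilon>^2 + 8 * \<epsilon>) / (1/256)^2"
  define C :: real where "C = 2 * K + 4 * \<epsilon> + 2"
  have K: "0 \<le> K" and C: "1 \<le> C"
    using assms by (simp_all add: K_def C_def)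
  show ?thesis
  proof (intro exI allI impI)
    fix n :: nat
    assume "nat \<lceil>exp (2 * ln C + 1)\<rceil> + 4 \<le> n" and "even n"
    then have n: "4 \<le> n" "even n" "exp (2 * ln C + 1) \<le> real n"
      by linarith+
    then have lnn: "2 * ln C + 1 \<le> ln (real n)"
      by (subst ln_ge_iff) auto
    obtain mL k Mb where "K * ln (real n) \<le> 2^mL" "real (2^mL * n + k) \<le> C * real n * ln (real n)"
      "2^mL * n + k < 2^Mb" "real Mb \<le> 5 * ln (real n)" "(3/4)^k \<le> exp (- \<epsilon> * ln (real n))"
      using runtime_parameters[OF _ K C_def n(1) lnn] assms by auto
    then show "prob_runtime_le \<epsilon> n (2 * C * real n * ln (real n))
        \<ge> 1 - (11 * C + 1) * real n powr (2 - \<epsilon> / 3) * (ln (real n))^2"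
      using prob_runtime_le_ge_powr[OF n(1,2) _ _ C] lnn ln_ge_zero[OF C] assms
      by (simp add: K_def)
  qed
qed

end
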